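(* Let $(\mathcal{F}_\alpha)_{\alpha<\omega_1}$ be a transfinite family. Let $1\le\alpha<\omega_1$, let $(\alpha_n)$ be a strictly increasing sequence of countable ordinals with $\alpha_1\ge1$, let $(\Theta_n)\subset(0,1]$ be non-increasing, and let $(\ell_n)\subset\mathbb{N}$ be non-decreasing with $\ell_1=1$ and $\ell_n\to\infty$. Let $S(\mathcal{F}_\alpha)$, $S((\Theta_n),(\mathcal{F}_{\alpha_n}))$ and $S((\Theta_n),(\mathcal{F}_{\alpha_n}),(\ell_n))$ be the completions of $c_{00}$ under the norms $\|x\|=\sup_{E\in\mathcal{F}_\alpha}\sum_{i\in E}|x_i|$, $\ \|x\|=\sup_n\Theta_n\sup_{E\in\mathcal{F}_{\alpha_n}}\sum_{i\in E}|x_i|$, $\ \|x\|=\sup_n\Theta_n\sup_{E\in\mathcal{F}_{\alpha_n},\ \ell_n\le\min E}\sum_{i\in E}|x_i|$ respectively. Then $S(\mathcal{F}_\alpha)$ and $S((\Theta_n),(\mathcal{F}_{\alpha_n}),(\ell_n))$ are hereditarily $c_0$, and if moreover $\Theta_n\to0$ then $S((\Theta_n),(\mathcal{F}_{\alpha_n}))$ is hereditarily $c_0$.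
   Context: $c_{00}$ = finitely supported real sequences $x=(x_i)$. A Banach space is hereditarily $c_0$ if every infinite-dimensional closed subspace contains a subspace isomorphic to $c_0$. Transfinite family: given, for each countable limit ordinal $\alpha$, finite sets $A_n(\alpha)\subset[0,\alpha)$ increasing in $n$ with $\max A_n(\alpha)\to\alpha$, set $\mathcal{F}_0=\{\emptyset\}$, $\mathcal{F}_{\beta+1}=\{\{n\}\cup E:n\in\mathbb{N},E\in\mathcal{F}_\beta\}\cup\{\emptyset\}$, and for limit $\alpha$, $\mathcal{F}_\alpha=\{\emptyset\}\cup\{E\ne\emptyset:E\in\bigcup_{\beta\in A_{\min E}(\alpha)}\mathcal{F}_\beta\}$. *)

theory Defs
  imports Complex_Main "HOL-Library.Extended_Real" "HOL-Library.Countable_Set"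
begin

definition ord_least :: "'o::wellorder \<Rightarrow> bool" where
  "ord_least \<alpha> \<longleftrightarrow> (\<forall>\<beta>. \<alpha> \<le> \<beta>)"

definition ord_succ_of :: "'o::wellorder \<Rightarrow> 'o \<Rightarrow> bool" where
  "ord_succ_of \<alpha> \<beta> \<longleftrightarrow> \<beta> < \<alpha> \<and> \<not> (\<exists>\<gamma>. \<beta> < \<gamma> \<and> \<gamma> < \<alpha>)"

definition ord_limit :: "'o::wellorder \<Rightarrow> bool" where
  "ord_limit \<alpha> \<longleftrightarrow> \<not> ord_least \<alpha> \<and> \<not> (\<exists>\<beta>. ord_succ_of \<alpha> \<beta>)"

definition transfinite_family ::
  "(nat \<Rightarrow> 'o::wellorder \<Rightarrow> 'o set) \<Rightarrow> ('o \<Rightarrow> nat set set) \<Rightarrow> bool" where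
  "transfinite_family A F \<longleftrightarrow>
     (\<forall>\<alpha>. ord_limit \<alpha> \<longrightarrow>
        (\<forall>n. finite (A n \<alpha>) \<and> A n \<alpha> \<subseteq> {..<\<alpha>} \<and> A n \<alpha> \<subseteq> A (Suc n) \<alpha>) \<and>
        (\<forall>\<beta><\<alpha>. \<exists>n. \<exists>\<gamma>\<in>A n \<alpha>. \<beta> \<le> \<gamma>)) \<and>
     (\<forall>\<alpha>. ord_least \<alpha> \<longrightarrow> F \<alpha> = {{}}) \<and>
     (\<forall>\<alpha> \<beta>. ord_succ_of \<alpha> \<beta> \<longrightarrow>
        F \<alpha> = {insert n E | n E. E \<in> F \<beta>} \<union> {{}}) \<and>
     (\<forall>\<alpha>. ord_limit \<alpha> \<longrightarrow>
        F \<alpha> = {{}} \<union> {E. E \<noteq> {} \<and> finite E \<and> (\<exists>\<beta>\<in>A (Min E) \<alpha>. E \<in> F \<beta>)})"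

definition schreier_norm :: "('o \<Rightarrow> nat set set) \<Rightarrow> 'o \<Rightarrow> (nat \<Rightarrow> real) \<Rightarrow> ereal" where
  "schreier_norm F \<alpha> x = (SUP E\<in>F \<alpha>. ereal (\<Sum>i\<in>E. \<bar>x i\<bar>))"

definition mixed_norm ::
  "('o \<Rightarrow> nat set set) \<Rightarrow> (nat \<Rightarrow> real) \<Rightarrow> (nat \<Rightarrow> 'o) \<Rightarrow> (nat \<Rightarrow> real) \<Rightarrow> ereal" where
  "mixed_norm F \<Theta> \<alpha>s x = (SUP n. ereal (\<Theta> n) * (SUP E\<in>F (\<alpha>s n). ereal (\<Sum>i\<in>E. \<bar>x i\<bar>)))"

definition mixed_norm_l ::
  "('o \<Rightarrow> nat set set) \<Rightarrow> (nat \<Rightarrow> real) \<Rightarrow> (nat \<Rightarrow> 'o) \<Rightarrow> (nat \<Rightarrow> nat) \<Rightarrow> (nat \<Rightarrow> real) \<Rightarrow> ereal" where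
  "mixed_norm_l F \<Theta> \<alpha>s l x =
     (SUP n. ereal (\<Theta> n) * (SUP E\<in>{E\<in>F (\<alpha>s n). \<forall>i\<in>E. l n \<le> i}. ereal (\<Sum>i\<in>E. \<bar>x i\<bar>)))"

definition c00 :: "(nat \<Rightarrow> real) set" where
  "c00 = {x. finite {i. x i \<noteq> 0}}"

text \<open>Completion of c00 under N, realised as the N-closure of c00 among sequences of finite N-norm.\<close>
definition completion_c00 :: "((nat \<Rightarrow> real) \<Rightarrow> ereal) \<Rightarrow> (nat \<Rightarrow> real) set" where
  "completion_c00 N = {x. N x < \<infinity> \<and> (\<forall>e>0. \<exists>y\<in>c00. N (\<lambda>i. x i - y i) < ereal e)}"

definition lin_subspace :: "(nat \<Rightarrow> real) set \<Rightarrow> bool" where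
  "lin_subspace Y \<longleftrightarrow> (\<lambda>_. 0) \<in> Y \<and> (\<forall>x\<in>Y. \<forall>y\<in>Y. (\<lambda>i. x i + y i) \<in> Y) \<and>
     (\<forall>c. \<forall>x\<in>Y. (\<lambda>i. c * x i) \<in> Y)"

definition N_closed_in :: "((nat \<Rightarrow> real) \<Rightarrow> ereal) \<Rightarrow> (nat \<Rightarrow> real) set \<Rightarrow> (nat \<Rightarrow> real) set \<Rightarrow> bool" where
  "N_closed_in N X Y \<longleftrightarrow> (\<forall>x\<in>X. (\<forall>e>0. \<exists>y\<in>Y. N (\<lambda>i. x i - y i) < ereal e) \<longrightarrow> x \<in> Y)"

definition fin_dim :: "(nat \<Rightarrow> real) set \<Rightarrow> bool" where
  "fin_dim Y \<longleftrightarrow> (\<exists>B. finite B \<and> Y \<subseteq> {(\<lambda>i. \<Sum>b\<in>B. c b * b i) | c. True})"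

definition c0_seq :: "(nat \<Rightarrow> real) set" where
  "c0_seq = {x. x \<longlonglongrightarrow> 0}"

definition sup_norm :: "(nat \<Rightarrow> real) \<Rightarrow> real" where
  "sup_norm x = (SUP i. \<bar>x i\<bar>)"

definition lin_on :: "(nat \<Rightarrow> real) set \<Rightarrow> ((nat \<Rightarrow> real) \<Rightarrow> (nat \<Rightarrow> real)) \<Rightarrow> bool" where
  "lin_on V T \<longleftrightarrow> (\<forall>x\<in>V. \<forall>y\<in>V. \<forall>a b.
      T (\<lambda>i. a * x i + b * y i) = (\<lambda>i. a * T x i + b * T y i))"

definition contains_c0 :: "((nat \<Rightarrow> real) \<Rightarrow> ereal) \<Rightarrow> (nat \<Rightarrow> real) set \<Rightarrow> bool" where
  "contains_c0 N Y \<longleftrightarrow> (\<exists>T. (\<forall>x\<in>c0_seq. T x \<in> Y) \<and> lin_on c0_seq T \<and>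
     (\<exists>a>0. \<exists>b>0. \<forall>x\<in>c0_seq. ereal (a * sup_norm x) \<le> N (T x) \<and> N (T x) \<le> ereal (b * sup_norm x)))"

definition hereditarily_c0 :: "((nat \<Rightarrow> real) \<Rightarrow> ereal) \<Rightarrow> bool" where
  "hereditarily_c0 N \<longleftrightarrow> (\<forall>Y. Y \<subseteq> completion_c00 N \<and> lin_subspace Y \<and>
      N_closed_in N (completion_c00 N) Y \<and> \<not> fin_dim Y \<longrightarrow> contains_c0 N Y)"

end

(* All three norms are suprema of functionals x |-> theta * (sum of |x i| over i in E) over a
   set G of weighted finite sets (theta, E).  Call G c0-saturated if every subspace of vectors
   with G-null tails that contains G-nonzero vectors arbitrarily far out contains a block
   sequence equivalent to the unit vector basis of c0; with the series x |-> sum_k x k * ys k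
   this yields a copy of c0 in every closed infinite-dimensional subspace of the completion.
   Saturation comes from a dichotomy against simpler, already saturated sets G' p: either far
   out on the subspace the G-norm is dominated by some G' p-norm and the c0-sequence of G' p
   transfers, or there are normalized blocks y k, each tiny for a prescribed G' p, and then
   the sums over k of the values of a G-functional on y k are uniformly bounded, which makes
   the blocks equivalent to the c0-basis.  For Schreier families this is a transfinite
   induction on the level (a successor level is compared with its predecessor, a limit level
   with the finitely many levels A n alpha); the mixed norms are compared with finitely many
   Schreier levels, and l n -> oo, respectively Theta n -> 0, makes the late levels harmless. *)

theory Submission
  imports Defs
begin

type_synonym wset = "real \<times> nat set"

definition wsum :: "wset \<Rightarrow> (nat \<Rightarrow> real) \<Rightarrow> real" where
  "wsum g y = fst g * (\<Sum>i\<in>snd g. \<bar>y i\<bar>)"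

definition norming :: "wset set \<Rightarrow> bool" where
  "norming G \<longleftrightarrow> (\<forall>g\<in>G. 0 \<le> fst g \<and> finite (snd g))"

definition fnorm :: "wset set \<Rightarrow> (nat \<Rightarrow> real) \<Rightarrow> ereal" where
  "fnorm G x = (SUP g\<in>G. ereal (wsum g x))"

definition vanishes_below :: "nat \<Rightarrow> (nat \<Rightarrow> real) \<Rightarrow> bool" where
  "vanishes_below M y \<longleftrightarrow> (\<forall>i<M. y i = 0)"

definition tail_from :: "nat \<Rightarrow> (nat \<Rightarrow> real) \<Rightarrow> nat \<Rightarrow> real" where
  "tail_from M y i = (if i < M then 0 else y i)"

definition tail_null :: "wset set \<Rightarrow> (nat \<Rightarrow> real) \<Rightarrow> bool" where
  "tail_null G y \<longleftrightarrow> (\<exists>R. \<forall>g\<in>G. wsum g y \<le> R) \<and> (\<forall>e>0. \<exists>M. \<forall>g\<in>G. wsum g (tail_from M y) \<le> e)"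

definition lincomb :: "nat \<Rightarrow> (nat \<Rightarrow> real) \<Rightarrow> (nat \<Rightarrow> nat \<Rightarrow> real) \<Rightarrow> nat \<Rightarrow> real" where
  "lincomb n c ys i = (\<Sum>k<n. c k * ys k i)"

lemma norming_nonneg: "norming G \<Longrightarrow> g \<in> G \<Longrightarrow> 0 \<le> fst g"
  and norming_finite: "norming G \<Longrightarrow> g \<in> G \<Longrightarrow> finite (snd g)"
  unfolding norming_def by auto

lemma wsum_nonneg: "0 \<le> fst g \<Longrightarrow> 0 \<le> wsum g y"
  unfolding wsum_def by (simp add: sum_nonneg)

lemma wsum_empty [simp]: "wsum (c, {}) y = 0"
  by (simp add: wsum_def)

lemma wsum_singleton [simp]: "wsum (c, {i}) y = c * \<bar>y i\<bar>"
  by (simp add: wsum_def)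

lemma wsum_weight: "wsum (c, E) y = c * wsum (1, E) y"
  by (simp add: wsum_def)

lemma wsum_le_unit_weight: "0 \<le> c \<Longrightarrow> c \<le> 1 \<Longrightarrow> wsum (c, E) y \<le> wsum (1, E) y"
  unfolding wsum_weight[of c] by (intro mult_left_le_one_le) (auto simp: wsum_def sum_nonneg)

lemma wsum_mono:
  "0 \<le> fst g \<Longrightarrow> (\<And>i. i \<in> snd g \<Longrightarrow> \<bar>x i\<bar> \<le> \<bar>y i\<bar>) \<Longrightarrow> wsum g x \<le> wsum g y"
  unfolding wsum_def by (intro mult_left_mono sum_mono) auto

lemma wsum_cong: "(\<And>i. i \<in> snd g \<Longrightarrow> x i = y i) \<Longrightarrow> wsum g x = wsum g y"
  unfolding wsum_def by (simp cong: sum.cong)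

lemma wsum_add: "0 \<le> fst g \<Longrightarrow> wsum g (\<lambda>i. x i + y i) \<le> wsum g x + wsum g y"
  unfolding wsum_def distrib_left[symmetric] sum.distrib[symmetric]
  by (intro mult_left_mono sum_mono abs_triangle_ineq)

lemma wsum_diff: "0 \<le> fst g \<Longrightarrow> wsum g (\<lambda>i. x i - y i) \<le> wsum g x + wsum g y"
  unfolding wsum_def distrib_left[symmetric] sum.distrib[symmetric]
  by (intro mult_left_mono sum_mono abs_triangle_ineq4)

lemma wsum_diff_commute: "wsum g (\<lambda>i. x i - y i) = wsum g (\<lambda>i. y i - x i)"
  unfolding wsum_def by (simp add: abs_minus_commute)

lemma wsum_scale: "wsum g (\<lambda>i. c * x i) = \<bar>c\<bar> * wsum g x"
  unfolding wsum_def by (simp add: abs_mult sum_distrib_left algebra_simps)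

lemma wsum_tail_from_antimono:
  "0 \<le> fst g \<Longrightarrow> M \<le> M' \<Longrightarrow> wsum g (tail_from M' y) \<le> wsum g (tail_from M y)"
  by (rule wsum_mono) (auto simp: tail_from_def)

lemma wsum_restrict_vanishing:
  assumes "finite E" "vanishes_below M y"
  shows "wsum (c, E) y = wsum (c, {i\<in>E. M \<le> i}) y"
  unfolding wsum_def using assms
  by (simp, intro disjI2 sum.mono_neutral_right) (auto simp: vanishes_below_def not_le)

lemma wsum_insert_le: "finite E \<Longrightarrow> wsum (1, insert m E) y \<le> \<bar>y m\<bar> + wsum (1, E) y"
  unfolding wsum_def by (cases "m \<in> E") (auto simp: insert_absorb)

lemma wsum_split_at:
  assumes "0 \<le> \<theta>" "finite E"
  shows "wsum (\<theta>, E) y \<le> \<theta> * (\<Sum>t<M. \<bar>y t\<bar>) + wsum (\<theta>, E) (tail_from M y)"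
proof -
  have "(\<Sum>t\<in>E. \<bar>y t\<bar>) = (\<Sum>t\<in>{t\<in>E. t < M}. \<bar>y t\<bar>) + (\<Sum>t\<in>E. \<bar>tail_from M y t\<bar>)"
    using assms(2)
    by (simp add: sum.inter_filter sum.distrib[symmetric] tail_from_def, intro sum.cong) auto
  also have "(\<Sum>t\<in>{t\<in>E. t < M}. \<bar>y t\<bar>) \<le> (\<Sum>t<M. \<bar>y t\<bar>)"
    by (intro sum_mono2) auto
  finally show ?thesis
    unfolding wsum_def using assms(1) by (simp add: mult_left_mono flip: distrib_left)
qed

lemma lincomb_Suc: "lincomb (Suc n) c ys = (\<lambda>i. lincomb n c ys i + c n * ys n i)"
  by (simp add: lincomb_def fun_eq_iff)

lemma wsum_lincomb:
  assumes "0 \<le> fst g"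
  shows "wsum g (lincomb n c ys) \<le> (\<Sum>j<n. \<bar>c j\<bar> * wsum g (ys j))"
proof (induction n)
  case 0
  then show ?case by (simp add: lincomb_def wsum_def)
next
  case (Suc n)
  have "wsum g (lincomb (Suc n) c ys) \<le> wsum g (lincomb n c ys) + \<bar>c n\<bar> * wsum g (ys n)"
    unfolding lincomb_Suc using wsum_add[OF assms, of "lincomb n c ys" "\<lambda>i. c n * ys n i"]
    by (simp add: wsum_scale)
  then show ?case using Suc.IH by simp
qed

lemma lin_subspace_zero: "lin_subspace Y \<Longrightarrow> (\<lambda>_. 0) \<in> Y"
  and lin_subspace_add: "lin_subspace Y \<Longrightarrow> x \<in> Y \<Longrightarrow> y \<in> Y \<Longrightarrow> (\<lambda>i. x i + y i) \<in> Y"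
  and lin_subspace_scale: "lin_subspace Y \<Longrightarrow> x \<in> Y \<Longrightarrow> (\<lambda>i. c * x i) \<in> Y"
  unfolding lin_subspace_def by blast+

lemma lincomb_in_subspace: "lin_subspace Y \<Longrightarrow> (\<And>k. ys k \<in> Y) \<Longrightarrow> lincomb n c ys \<in> Y"
proof (induction n)
  case 0
  then show ?case using lin_subspace_zero by (simp add: lincomb_def)
next
  case (Suc n)
  then show ?case using lin_subspace_add lin_subspace_scale by (simp add: lincomb_Suc)
qed

lemma vanishes_below_mono: "vanishes_below M y \<Longrightarrow> M' \<le> M \<Longrightarrow> vanishes_below M' y"
  unfolding vanishes_below_def by auto

lemma fnorm_le_iff: "fnorm G x \<le> ereal r \<longleftrightarrow> (\<forall>g\<in>G. wsum g x \<le> r)"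
  by (simp add: fnorm_def SUP_le_iff)

lemma fnorm_lessD: "fnorm G x < ereal e \<Longrightarrow> g \<in> G \<Longrightarrow> wsum g x \<le> e"
  unfolding fnorm_def by (metis SUP_upper ereal_less_eq(3) le_less_trans less_imp_le)

lemma fnorm_lessI:
  assumes "\<forall>g\<in>G. wsum g x \<le> r" "r < e"
  shows "fnorm G x < ereal e"
proof -
  have "fnorm G x \<le> ereal r"
    using assms(1) fnorm_le_iff by blast
  moreover have "ereal r < ereal e"
    using assms(2) by simp
  ultimately show ?thesis
    by (rule le_less_trans)
qed

lemma half_power_sum_le: "(\<Sum>j<n. (1/2::real)^j) \<le> 2"
proof -
  have "(\<Sum>j<n. (1/2::real)^j) = 2 - 2 * (1/2)^n"
    by (induction n) (auto simp: field_simps)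
  then show ?thesis by simp
qed

lemma geometric_tail_sum: "(\<Sum>j<n. (1/2::real)^(j+3)) \<le> 1/4"
proof -
  have "(\<Sum>j<n. (1/2::real)^(j+3)) = (\<Sum>j<n. (1/2)^j) / 8"
    by (simp add: power_add sum_divide_distrib power3_eq_cube)
  then show ?thesis
    using half_power_sum_le[of n] by simp
qed

lemma half_power_shift_le: "(1/2::real)^(j+3) \<le> (1/2)^j"
  by (rule power_decreasing) simp_all

lemma sum_le_8_around:
  fixes f :: "nat \<Rightarrow> real"
  assumes before: "\<And>j. j < k \<Longrightarrow> f j \<le> c + 2 * (1/2)^j" and at: "f k \<le> 2"
    and after: "\<And>j. k < j \<Longrightarrow> f j \<le> 2 * (1/2)^j" and c: "0 \<le> c" "real k * c \<le> 1"
  shows "(\<Sum>j<n. f j) \<le> 8"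
proof -
  have "(\<Sum>j<n. f j) \<le> (\<Sum>j<n. (if j < k then c else 0) + (if j = k then 2 else 0) + 2 * (1/2)^j)"
  proof (intro sum_mono)
    fix j
    show "f j \<le> (if j < k then c else 0) + (if j = k then 2 else 0) + 2 * (1/2)^j"
      using before[of j] at after[of j] by (cases j k rule: linorder_cases) (auto intro: add_increasing2)
  qed
  also have "\<dots> = (\<Sum>j<n. if j < k then c else 0) + (\<Sum>j<n. if j = k then 2 else 0) + 2 * (\<Sum>j<n. (1/2)^j)"
    by (simp add: sum.distrib sum_distrib_left)
  also have "(\<Sum>j<n. if j < k then c else 0) = (\<Sum>j\<in>{j\<in>{..<n}. j < k}. c)"
    by (rule sum.inter_filter[symmetric]) simp
  also have "\<dots> \<le> (\<Sum>j<k. c)"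
    using c(1) by (intro sum_mono2) auto
  finally show ?thesis
    using c(2) half_power_sum_le[of n] by (simp add: sum.delta split: if_splits)
qed

lemma sum_le_8_if_geometric:
  fixes f :: "nat \<Rightarrow> real"
  assumes "\<And>j. f j \<le> (1/2)^j"
  shows "(\<Sum>j<n. f j) \<le> 8"
proof (rule sum_le_8_around[where k = 0 and c = 0])
  show "f j \<le> 2 * (1/2)^j" for j
    using assms[of j] zero_le_power[of "1/2::real" j] by linarith
qed (use assms[of 0] in simp_all)

lemma sum_le_8_threshold:
  fixes f c :: "nat \<Rightarrow> real" and P :: "nat \<Rightarrow> bool"
  assumes small: "\<And>j. \<not> P j \<Longrightarrow> f j \<le> (1/2)^j" and top: "\<And>j. f j \<le> 1"
    and below: "\<And>j j'. j < j' \<Longrightarrow> P j' \<Longrightarrow> f j \<le> c j' + (1/2)^(j+3)"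
    and c: "\<And>j. 0 \<le> c j \<and> real j * c j \<le> 1"
  shows "(\<Sum>j<n. f j) \<le> 8"
proof (cases "\<exists>j<n. P j")
  case True
  define k where "k = Max {j. j < n \<and> P j}"
  have k: "k < n" "P k" and k_max: "\<And>j. j < n \<Longrightarrow> P j \<Longrightarrow> j \<le> k"
    using Max_in[of "{j. j < n \<and> P j}"] True unfolding k_def by auto
  define f' where "f' j = (if j < n then f j else 0)" for j
  have "(\<Sum>j<n. f' j) \<le> 8"
  proof (rule sum_le_8_around[where k = k and c = "c k"])
    show "f' j \<le> c k + 2 * (1/2)^j" if "j < k" for j
    proof -
      have "f j \<le> c k + 2 * (1/2)^j"
        using below[OF that k(2)] half_power_shift_le[of j] zero_le_power[of "1/2::real" j] by linarith
      then show ?thesis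
        using c[of k] unfolding f'_def by simp
    qed
    show "f' j \<le> 2 * (1/2)^j" if "k < j" for j
    proof (cases "j < n")
      case True
      then have "f j \<le> (1/2)^j"
        using small k_max[of j] that by fastforce
      then have "f j \<le> 2 * (1/2)^j"
        using zero_le_power[of "1/2::real" j] by linarith
      then show ?thesis
        using True by (simp add: f'_def)
    qed (simp add: f'_def)
  qed (use top[of k] c[of k] in \<open>simp_all add: f'_def\<close>)
  then show ?thesis
    by (simp add: f'_def)
next
  case False
  then have "(\<Sum>j<n. (if j < n then f j else 0)) \<le> 8"
    using small by (intro sum_le_8_if_geometric) auto
  then show ?thesis
    by simp
qed

lemma tendsto_zero_eventually_le:
  fixes f :: "nat \<Rightarrow> real"
  assumes "f \<longlonglongrightarrow> 0" "0 < e"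
  shows "\<exists>N. \<forall>q>N. f q \<le> e"
proof -
  have "\<forall>\<^sub>F q in sequentially. f q < e"
    using order_tendstoD(2)[OF assms] .
  then show ?thesis
    unfolding eventually_sequentially by (meson less_imp_le order.strict_implies_order)
qed

lemma mult_le_inverse_Suc:
  fixes \<theta> S t :: real and j m :: nat
  assumes t: "0 < t" and \<theta>: "0 < \<theta>" "\<theta> \<le> t / ((real j + 1) * (real m + 1))"
    and S: "0 \<le> S" "S \<le> real m / t"
  shows "\<theta> * S \<le> 1 / (real j + 1)"
proof -
  have "\<theta> * S \<le> t / ((real j + 1) * (real m + 1)) * (real m / t)"
    using \<theta> S by (intro mult_mono) auto
  also have "\<dots> = real m / (real m + 1) / (real j + 1)"
    using t by (simp add: field_simps)
  also have "\<dots> \<le> 1 / (real j + 1)"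
    by (intro divide_right_mono) simp_all
  finally show ?thesis .
qed

lemma near_sup_scale:
  fixes f :: "'a \<Rightarrow> real"
  assumes bdd: "bdd_above (f ` G)" and g: "g \<in> G" and r: "0 \<le> r" and \<delta>: "0 < \<delta>"
    and big: "2 * r < \<delta> * f g"
  shows "\<exists>s>0. (\<forall>h\<in>G. f h \<le> s) \<and> (\<exists>h\<in>G. s / 2 < f h) \<and> r \<le> \<delta> * s"
proof -
  define s where "s = Sup (f ` G)"
  have le: "\<forall>h\<in>G. f h \<le> s"
    unfolding s_def using bdd by (auto intro: cSup_upper)
  have "0 < f g"
    using r \<delta> big by (smt (verit) mult_nonneg_nonpos)
  then have s: "0 < s"
    using le g by fastforce
  then obtain h where "h \<in> G" "s / 2 < f h"
    using less_cSup_iff[of "f ` G" "s / 2"] bdd g unfolding s_def by auto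
  moreover have "\<delta> * f g \<le> \<delta> * s"
    using le g \<delta> by simp
  ultimately show ?thesis
    using s le r big by (intro exI[of _ s]) auto
qed

section \<open>Normalized block sequences\<close>

text \<open>\<open>ys\<close> is a block sequence in \<open>Y\<close> equivalent, in the norm of \<open>G\<close>, to the unit vector basis
  of \<open>c\<^sub>0\<close>.\<close>
definition has_c0_sequence :: "wset set \<Rightarrow> (nat \<Rightarrow> real) set \<Rightarrow> bool" where
  "has_c0_sequence G Y \<longleftrightarrow> (\<exists>ys a b. 0 < a \<and> 0 < b \<and> (\<forall>k. ys k \<in> Y \<and> vanishes_below k (ys k)) \<and>
     (\<forall>n c m. 0 \<le> m \<longrightarrow> (\<forall>k<n. \<bar>c k\<bar> \<le> m) \<longrightarrow> (\<forall>g\<in>G. wsum g (lincomb n c ys) \<le> b * m)) \<and>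
     (\<forall>n c k. k < n \<longrightarrow> (\<forall>j<n. \<bar>c j\<bar> \<le> \<bar>c k\<bar>) \<longrightarrow> (\<exists>g\<in>G. a * \<bar>c k\<bar> \<le> wsum g (lincomb n c ys))))"

definition normalized_blocks :: "wset set \<Rightarrow> (nat \<Rightarrow> nat \<Rightarrow> real) \<Rightarrow> (nat \<Rightarrow> nat) \<Rightarrow> bool" where
  "normalized_blocks G ys Mp \<longleftrightarrow> strict_mono Mp \<and> (\<forall>k. vanishes_below (Mp k) (ys k) \<and>
     (\<forall>g\<in>G. wsum g (ys k) \<le> 1) \<and> (\<exists>g\<in>G. 1/2 < wsum g (ys k)) \<and>
     (\<forall>g\<in>G. wsum g (tail_from (Mp (Suc k)) (ys k)) \<le> (1/2)^(k+3)))"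

lemma normalized_blocksD:
  assumes "normalized_blocks G ys Mp"
  shows "strict_mono Mp" "vanishes_below (Mp k) (ys k)" "g \<in> G \<Longrightarrow> wsum g (ys k) \<le> 1"
    "\<exists>g\<in>G. 1/2 < wsum g (ys k)" "g \<in> G \<Longrightarrow> wsum g (tail_from (Mp (Suc k)) (ys k)) \<le> (1/2)^(k+3)"
  using assms unfolding normalized_blocks_def by blast+

lemma normalized_block_step:
  assumes lin: "lin_subspace Y" and tn: "\<forall>y\<in>Y. tail_null G y" and G: "norming G"
    and zero: "(1, {}) \<in> G'" and \<delta>: "0 < \<delta>" and e: "0 < e"
    and large: "\<exists>y\<in>Y. vanishes_below M y \<and>
       (\<exists>r. (\<forall>g\<in>G'. wsum g y \<le> r) \<and> (\<exists>g\<in>G. (2 / \<delta>) * r < wsum g y))"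
  shows "\<exists>y\<in>Y. \<exists>M'>M. vanishes_below M y \<and> (\<forall>g\<in>G. wsum g y \<le> 1) \<and> (\<exists>g\<in>G. 1/2 < wsum g y) \<and>
     (\<forall>g\<in>G'. wsum g y \<le> \<delta>) \<and> (\<forall>g\<in>G. wsum g (tail_from M' y) \<le> e)"
proof -
  obtain y r g where y: "y \<in> Y" "vanishes_below M y" and r: "\<forall>g\<in>G'. wsum g y \<le> r"
    and g: "g \<in> G" "(2 / \<delta>) * r < wsum g y"
    using large by blast
  have "0 \<le> r"
    using r zero by fastforce
  obtain R where "\<forall>g\<in>G. wsum g y \<le> R"
    using tn y(1) unfolding tail_null_def by blast
  then have "bdd_above ((\<lambda>g. wsum g y) ` G)"
    by (auto intro: bdd_aboveI)
  then obtain s where s: "0 < s" "\<forall>h\<in>G. wsum h y \<le> s" "\<exists>h\<in>G. s / 2 < wsum h y" "r \<le> \<delta> * s"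
    using near_sup_scale[of "\<lambda>g. wsum g y", OF _ g(1) \<open>0 \<le> r\<close> \<delta>] g(2) \<delta> by (auto simp: field_simps)
  define y' where "y' = (\<lambda>i. (1 / s) * y i)"
  have y': "y' \<in> Y"
    unfolding y'_def using lin y(1) by (rule lin_subspace_scale)
  have wsum_y': "wsum h y' = wsum h y / s" for h
    unfolding y'_def wsum_scale using s(1) by simp
  obtain M1 where M1: "\<forall>g\<in>G. wsum g (tail_from M1 y') \<le> e"
    using tn y' e unfolding tail_null_def by blast
  have "\<forall>g\<in>G. wsum g (tail_from (max M1 (Suc M)) y') \<le> e"
    using M1 wsum_tail_from_antimono[OF norming_nonneg[OF G]] by (meson max.cobounded1 order_trans)
  moreover have "vanishes_below M y'"
    using y(2) unfolding vanishes_below_def y'_def by simp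
  moreover have "\<forall>g'\<in>G'. wsum g' y' \<le> \<delta>"
    using r s(1,4) by (auto simp: wsum_y' pos_divide_le_eq intro: order_trans)
  ultimately show ?thesis
    using y' s(1-3) by (intro bexI[OF _ y'] exI[of _ "max M1 (Suc M)"]) (auto simp: wsum_y' field_simps)
qed

lemma normalized_blocks_exist:
  fixes G' :: "nat \<Rightarrow> nat \<Rightarrow> wset set"
  assumes lin: "lin_subspace Y" and tn: "\<forall>y\<in>Y. tail_null G y" and G: "norming G"
    and zero: "\<And>k M. (1, {}) \<in> G' k M"
    and large: "\<And>k M C. 0 < C \<Longrightarrow> \<exists>y\<in>Y. vanishes_below M y \<and>
       (\<exists>r. (\<forall>g\<in>G' k M. wsum g y \<le> r) \<and> (\<exists>g\<in>G. C * r < wsum g y))"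
  shows "\<exists>ys Mp. normalized_blocks G ys Mp \<and> Mp 0 = M\<^sub>0 \<and>
     (\<forall>k. ys k \<in> Y \<and> (\<forall>g\<in>G' k (Mp k). wsum g (ys k) \<le> (1/2)^k))"
proof -
  have "\<exists>y\<in>Y. \<exists>M'>M. vanishes_below M y \<and> (\<forall>g\<in>G. wsum g y \<le> 1) \<and>
     (\<exists>g\<in>G. 1/2 < wsum g y) \<and> (\<forall>g\<in>G' k M. wsum g y \<le> (1/2)^k) \<and>
     (\<forall>g\<in>G. wsum g (tail_from M' y) \<le> (1/2)^(k+3))" for k M
    by (rule normalized_block_step[OF lin tn G zero]) (use large[of "2 / (1/2)^k" M k] in simp_all)
  then have "\<forall>k M. \<exists>y M'. y \<in> Y \<and> M < M' \<and> vanishes_below M y \<and> (\<forall>g\<in>G. wsum g y \<le> 1) \<and>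
     (\<exists>g\<in>G. 1/2 < wsum g y) \<and> (\<forall>g\<in>G' k M. wsum g y \<le> (1/2)^k) \<and>
     (\<forall>g\<in>G. wsum g (tail_from M' y) \<le> (1/2)^(k+3))"
    by blast
  then obtain yf Mf where step: "\<And>k M. yf k M \<in> Y \<and> M < Mf k M \<and> vanishes_below M (yf k M) \<and>
     (\<forall>g\<in>G. wsum g (yf k M) \<le> 1) \<and> (\<exists>g\<in>G. 1/2 < wsum g (yf k M)) \<and>
     (\<forall>g\<in>G' k M. wsum g (yf k M) \<le> (1/2)^k) \<and>
     (\<forall>g\<in>G. wsum g (tail_from (Mf k M) (yf k M)) \<le> (1/2)^(k+3))"
    by metis
  define Mp where "Mp = rec_nat M\<^sub>0 Mf"
  have Mp_Suc: "Mp (Suc k) = Mf k (Mp k)" for k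
    by (simp add: Mp_def)
  have "strict_mono Mp"
    using step by (simp add: strict_mono_Suc_iff Mp_Suc)
  then have "normalized_blocks G (\<lambda>k. yf k (Mp k)) Mp"
    unfolding normalized_blocks_def using step by (simp add: Mp_Suc)
  moreover have "Mp 0 = M\<^sub>0"
    by (simp add: Mp_def)
  ultimately show ?thesis
    using step by blast
qed

lemma normalized_blocks_beyond:
  assumes B: "normalized_blocks G ys Mp" and g: "g \<in> G" and beyond: "\<forall>i\<in>snd g. Mp (Suc j) \<le> i"
  shows "wsum g (ys j) \<le> (1/2)^(j+3)"
proof -
  have "wsum g (ys j) = wsum g (tail_from (Mp (Suc j)) (ys j))"
    using beyond by (intro wsum_cong) (auto simp: tail_from_def)
  then show ?thesis
    using normalized_blocksD(5)[OF B g] by simp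
qed

lemma normalized_blocks_bounded_coordinates:
  assumes B: "normalized_blocks G ys Mp" and t0: "0 < t0" and sing: "\<And>t. Mp 0 \<le> t \<Longrightarrow> (t0, {t}) \<in> G"
  shows "\<bar>ys j t\<bar> \<le> 1 / t0"
proof (cases "Mp 0 \<le> t")
  case True
  then have "t0 * \<bar>ys j t\<bar> \<le> 1"
    using normalized_blocksD(3)[OF B sing[OF True], of j] by simp
  then show ?thesis
    using t0 by (simp add: pos_le_divide_eq mult.commute)
next
  case False
  then have "ys j t = 0"
    using normalized_blocksD(2)[OF B, of j] strict_mono_less_eq[OF normalized_blocksD(1)[OF B], of 0 j]
    by (simp add: vanishes_below_def)
  then show ?thesis
    using t0 by simp
qed

definition block_part :: "nat \<Rightarrow> nat \<Rightarrow> (nat \<Rightarrow> real) \<Rightarrow> nat \<Rightarrow> real" where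
  "block_part a b v i = (if a \<le> i \<and> i < b then v i else 0)"

lemma lincomb_block_part:
  assumes B: "normalized_blocks G ys Mp" and kn: "k < n"
  shows "block_part (Mp k) (Mp (Suc k)) (lincomb n c ys) i =
    lincomb k c (\<lambda>j. block_part (Mp k) (Mp (Suc k)) (ys j)) i
      + c k * block_part (Mp k) (Mp (Suc k)) (ys k) i"
proof (cases "Mp k \<le> i \<and> i < Mp (Suc k)")
  case True
  have "ys j i = 0" if "Suc k \<le> j" for j
    using normalized_blocksD(2)[OF B, of j] True that
      strict_mono_less_eq[OF normalized_blocksD(1)[OF B], of "Suc k" j]
    unfolding vanishes_below_def by auto
  then have "lincomb n c ys i = (\<Sum>j<Suc k. c j * ys j i)"
    unfolding lincomb_def using kn by (intro sum.mono_neutral_right) auto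
  then show ?thesis
    using True by (simp add: block_part_def lincomb_def)
next
  case False
  then have "block_part (Mp k) (Mp (Suc k)) v i = 0" for v
    by (auto simp: block_part_def)
  then show ?thesis
    by (simp add: lincomb_def)
qed

lemma wsum_block_part_earlier:
  assumes G: "norming G" and B: "normalized_blocks G ys Mp" and g: "g \<in> G" and j: "j < k"
  shows "wsum g (block_part (Mp k) (Mp (Suc k)) (ys j)) \<le> (1/2)^(j+3)"
proof -
  have "Mp (Suc j) \<le> Mp k"
    using strict_mono_less_eq[OF normalized_blocksD(1)[OF B], of "Suc j" k] j by simp
  then have "wsum g (block_part (Mp k) (Mp (Suc k)) (ys j)) \<le> wsum g (tail_from (Mp (Suc j)) (ys j))"
    using norming_nonneg[OF G g] by (intro wsum_mono) (auto simp: block_part_def tail_from_def)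
  then show ?thesis
    using normalized_blocksD(5)[OF B g, of j] by linarith
qed

lemma wsum_block_part_current:
  assumes G: "norming G" and B: "normalized_blocks G ys Mp" and g: "g \<in> G"
  shows "wsum g (ys k) \<le> wsum g (block_part (Mp k) (Mp (Suc k)) (ys k)) + (1/2)^(k+3)"
proof -
  have "wsum g (ys k) =
      wsum g (\<lambda>i. block_part (Mp k) (Mp (Suc k)) (ys k) i + tail_from (Mp (Suc k)) (ys k) i)"
    using normalized_blocksD(2)[OF B, of k]
    by (intro wsum_cong) (auto simp: block_part_def tail_from_def vanishes_below_def)
  also have "\<dots> \<le> wsum g (block_part (Mp k) (Mp (Suc k)) (ys k)) + wsum g (tail_from (Mp (Suc k)) (ys k))"
    by (rule wsum_add[OF norming_nonneg[OF G g]])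
  finally show ?thesis
    using normalized_blocksD(5)[OF B g, of k] by linarith
qed

text \<open>A block \<open>ys k\<close> with a maximal coefficient is seen by a functional on its own support
  interval \<open>[Mp k, Mp (Suc k))\<close>, where the earlier blocks have only their small tails and the
  later ones vanish.\<close>
lemma normalized_blocks_lower_estimate:
  assumes G: "norming G" and B: "normalized_blocks G ys Mp" and kn: "k < n"
    and max: "\<forall>j<n. \<bar>c j\<bar> \<le> \<bar>c k\<bar>"
  shows "\<exists>g\<in>G. \<bar>c k\<bar> / 4 \<le> wsum g (lincomb n c ys)"
proof -
  obtain g where g: "g \<in> G" "1/2 < wsum g (ys k)"
    using normalized_blocksD(4)[OF B] by blast
  have g0: "0 \<le> fst g"
    using norming_nonneg[OF G g(1)] .
  let ?P = "block_part (Mp k) (Mp (Suc k))"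
  define S where "S = (\<Sum>j<k. (1/2::real)^(j+3))"
  have "\<bar>c k\<bar> * wsum g (?P (ys k)) = wsum g (\<lambda>i. ?P (lincomb n c ys) i - lincomb k c (\<lambda>j. ?P (ys j)) i)"
    by (simp add: lincomb_block_part[OF B kn] flip: wsum_scale)
  also have "\<dots> \<le> wsum g (?P (lincomb n c ys)) + wsum g (lincomb k c (\<lambda>j. ?P (ys j)))"
    by (rule wsum_diff[OF g0])
  also have "wsum g (?P (lincomb n c ys)) \<le> wsum g (lincomb n c ys)"
    using g0 by (intro wsum_mono) (auto simp: block_part_def)
  also have "wsum g (lincomb k c (\<lambda>j. ?P (ys j))) \<le> (\<Sum>j<k. \<bar>c j\<bar> * wsum g (?P (ys j)))"
    by (rule wsum_lincomb[OF g0])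
  also have "\<dots> \<le> (\<Sum>j<k. \<bar>c k\<bar> * (1/2)^(j+3))"
    using wsum_block_part_earlier[OF G B g(1)] max kn wsum_nonneg[OF g0] by (intro sum_mono mult_mono) auto
  finally have upper: "\<bar>c k\<bar> * wsum g (?P (ys k)) \<le> wsum g (lincomb n c ys) + \<bar>c k\<bar> * S"
    by (simp add: S_def sum_distrib_left)
  have "1/2 - (1/2)^(k+3) \<le> wsum g (?P (ys k))"
    using wsum_block_part_current[OF G B g(1), of k] g(2) by linarith
  then have "\<bar>c k\<bar> * (1/2 - (1/2)^(k+3)) \<le> \<bar>c k\<bar> * wsum g (?P (ys k))"
    by (rule mult_left_mono) simp
  moreover have "1/4 \<le> 1/2 - (1/2)^(k+3) - S"
    using geometric_tail_sum[of "Suc k"] unfolding S_def sum.lessThan_Suc by linarith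
  then have "\<bar>c k\<bar> * (1/4) \<le> \<bar>c k\<bar> * (1/2 - (1/2)^(k+3) - S)"
    by (rule mult_left_mono) simp
  ultimately show ?thesis
    using g(1) upper unfolding right_diff_distrib by (intro bexI[OF _ g(1)]) linarith
qed

lemma has_c0_sequence_of_normalized_blocks:
  assumes G: "norming G" and B: "normalized_blocks G ys Mp" and Y: "\<And>k. ys k \<in> Y"
    and summable: "\<forall>g\<in>G. \<forall>n. (\<Sum>j<n. wsum g (ys j)) \<le> C"
  shows "has_c0_sequence G Y"
proof -
  obtain g where g: "g \<in> G" "1/2 < wsum g (ys 0)"
    using normalized_blocksD(4)[OF B] by blast
  have "(\<Sum>j<1. wsum g (ys j)) \<le> C"
    using summable g(1) by blast
  then have C: "0 < C"
    using g(2) by simp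
  have "vanishes_below k (ys k)" for k
    using normalized_blocksD(2)[OF B] strict_mono_imp_increasing[OF normalized_blocksD(1)[OF B]]
    by (rule vanishes_below_mono)
  moreover have "wsum g (lincomb n c ys) \<le> C * m"
    if "0 \<le> m" "\<forall>k<n. \<bar>c k\<bar> \<le> m" "g \<in> G" for n c m g
  proof -
    have g0: "0 \<le> fst g"
      using norming_nonneg[OF G that(3)] .
    have "wsum g (lincomb n c ys) \<le> (\<Sum>j<n. \<bar>c j\<bar> * wsum g (ys j))"
      by (rule wsum_lincomb[OF g0])
    also have "\<dots> \<le> (\<Sum>j<n. m * wsum g (ys j))"
      using that(2) wsum_nonneg[OF g0] by (intro sum_mono mult_right_mono) auto
    also have "\<dots> \<le> m * C"
      using summable that(1,3) by (simp add: sum_distrib_left[symmetric] mult_left_mono)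
    finally show ?thesis
      by (simp add: mult.commute)
  qed
  moreover have "\<exists>g\<in>G. 1/4 * \<bar>c k\<bar> \<le> wsum g (lincomb n c ys)"
    if "k < n" "\<forall>j<n. \<bar>c j\<bar> \<le> \<bar>c k\<bar>" for n c k
    using normalized_blocks_lower_estimate[OF G B that] by simp
  ultimately show ?thesis
    unfolding has_c0_sequence_def using Y C
    by (intro exI[of _ ys] exI[of _ "1/4"] exI[of _ C]) auto
qed

section \<open>\<open>c\<^sub>0\<close>-saturated norming sets\<close>

definition c0_saturated :: "wset set \<Rightarrow> bool" where
  "c0_saturated G \<longleftrightarrow> (\<forall>Y. lin_subspace Y \<and> (\<forall>y\<in>Y. tail_null G y) \<and>
      (\<forall>M. \<exists>y\<in>Y. vanishes_below M y \<and> (\<exists>g\<in>G. 0 < wsum g y)) \<longrightarrow> has_c0_sequence G Y)"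

lemma c0_saturated_if_null: "(\<And>g y. g \<in> G \<Longrightarrow> wsum g y \<le> 0) \<Longrightarrow> c0_saturated G"
  unfolding c0_saturated_def by (meson not_le)

lemma has_c0_sequence_if_equivalent:
  assumes c0: "has_c0_sequence G' Y'" and lin: "lin_subspace Y'" and sub: "Y' \<subseteq> Y"
    and G: "norming G" "G \<noteq> {}" and C: "0 < C1" "0 < C2"
    and dom: "\<forall>y\<in>Y'. \<forall>r. (\<forall>g'\<in>G'. wsum g' y \<le> r) \<longrightarrow> (\<forall>g\<in>G. wsum g y \<le> C1 * r)"
    and rev: "\<forall>y\<in>Y'. \<forall>r. (\<forall>g\<in>G. wsum g y \<le> r) \<longrightarrow> (\<forall>g'\<in>G'. wsum g' y \<le> C2 * r)"
  shows "has_c0_sequence G Y"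
proof -
  obtain ys a b where ab: "0 < a" "0 < b" and ys: "\<forall>k. ys k \<in> Y' \<and> vanishes_below k (ys k)"
    and up: "\<forall>n c m. 0 \<le> m \<longrightarrow> (\<forall>k<n. \<bar>c k\<bar> \<le> m) \<longrightarrow> (\<forall>g\<in>G'. wsum g (lincomb n c ys) \<le> b * m)"
    and lo: "\<forall>n c k. k < n \<longrightarrow> (\<forall>j<n. \<bar>c j\<bar> \<le> \<bar>c k\<bar>) \<longrightarrow> (\<exists>g\<in>G'. a * \<bar>c k\<bar> \<le> wsum g (lincomb n c ys))"
    using c0 unfolding has_c0_sequence_def by blast
  have comb: "lincomb n c ys \<in> Y'" for n c
    using lincomb_in_subspace[OF lin] ys by blast
  have "\<forall>g\<in>G. wsum g (lincomb n c ys) \<le> (C1 * b) * m"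
    if "0 \<le> m" "\<forall>k<n. \<bar>c k\<bar> \<le> m" for n c m
    using dom comb up that by (simp add: mult.assoc)
  moreover have "\<exists>g\<in>G. (a / (2 * C2)) * \<bar>c k\<bar> \<le> wsum g (lincomb n c ys)"
    if kn: "k < n" and mx: "\<forall>j<n. \<bar>c j\<bar> \<le> \<bar>c k\<bar>" for n c k
  proof (rule ccontr)
    assume neg: "\<not> ?thesis"
    then have "\<forall>g\<in>G. wsum g (lincomb n c ys) \<le> (a / (2 * C2)) * \<bar>c k\<bar>"
      by auto
    then have "\<forall>g'\<in>G'. wsum g' (lincomb n c ys) \<le> C2 * (a / (2 * C2) * \<bar>c k\<bar>)"
      using rev comb by blast
    moreover obtain g' where "g' \<in> G'" "a * \<bar>c k\<bar> \<le> wsum g' (lincomb n c ys)"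
      using lo kn mx by blast
    moreover have "C2 * (a / (2 * C2) * \<bar>c k\<bar>) = a * \<bar>c k\<bar> / 2"
      using C(2) by simp
    ultimately have "a * \<bar>c k\<bar> \<le> 0"
      by fastforce
    then have "c k = 0"
      using ab(1) by (simp add: mult_le_0_iff)
    moreover obtain g where "g \<in> G"
      using G(2) by blast
    ultimately have "(a / (2 * C2)) * \<bar>c k\<bar> \<le> wsum g (lincomb n c ys)"
      using wsum_nonneg[OF norming_nonneg[OF G(1)]] by simp
    then show False
      using neg \<open>g \<in> G\<close> by blast
  qed
  ultimately show ?thesis
    unfolding has_c0_sequence_def using ab C ys sub
    by (intro exI[of _ ys] exI[of _ "a / (2 * C2)"] exI[of _ "C1 * b"]) auto
qed

lemma tail_null_if_dominated:
  assumes tn: "tail_null G y" and y: "vanishes_below M y" and C: "0 < C"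
    and rev: "\<forall>y. vanishes_below M y \<longrightarrow>
       (\<forall>r. (\<forall>g\<in>G. wsum g y \<le> r) \<longrightarrow> (\<forall>g'\<in>G'. wsum g' y \<le> C * r))"
  shows "tail_null G' y"
proof -
  obtain R where "\<forall>g\<in>G. wsum g y \<le> R"
    using tn unfolding tail_null_def by blast
  then have "\<forall>g'\<in>G'. wsum g' y \<le> C * R"
    using rev y by blast
  moreover have "\<exists>M'. \<forall>g'\<in>G'. wsum g' (tail_from M' y) \<le> e" if "0 < e" for e
  proof -
    obtain M' where "\<forall>g\<in>G. wsum g (tail_from M' y) \<le> e / C"
      using tn \<open>0 < e\<close> C unfolding tail_null_def by (meson divide_pos_pos)
    moreover have "vanishes_below M (tail_from M' y)"
      using y unfolding vanishes_below_def tail_from_def by auto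
    ultimately show ?thesis
      using rev C by fastforce
  qed
  ultimately show ?thesis
    unfolding tail_null_def by blast
qed

lemma has_c0_sequence_transfer:
  assumes sat: "c0_saturated G'" and lin: "lin_subspace Y" and tn: "\<forall>y\<in>Y. tail_null G y"
    and pos: "\<forall>M. \<exists>y\<in>Y. vanishes_below M y \<and> (\<exists>g\<in>G. 0 < wsum g y)" and G: "norming G"
    and C: "0 < C1" "0 < C2"
    and dom: "\<forall>y\<in>Y. vanishes_below M y \<longrightarrow>
       (\<forall>r. (\<forall>g'\<in>G'. wsum g' y \<le> r) \<longrightarrow> (\<forall>g\<in>G. wsum g y \<le> C1 * r))"
    and rev: "\<forall>y. vanishes_below M y \<longrightarrow>
       (\<forall>r. (\<forall>g\<in>G. wsum g y \<le> r) \<longrightarrow> (\<forall>g'\<in>G'. wsum g' y \<le> C2 * r))"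
  shows "has_c0_sequence G Y"
proof -
  define Y' where "Y' = {y\<in>Y. vanishes_below M y}"
  have lin': "lin_subspace Y'"
    using lin unfolding lin_subspace_def Y'_def vanishes_below_def by auto
  have "tail_null G' y" if "y \<in> Y'" for y
    using tail_null_if_dominated[OF _ _ C(2) rev] that tn unfolding Y'_def by blast
  moreover have "\<exists>y\<in>Y'. vanishes_below M' y \<and> (\<exists>g\<in>G'. 0 < wsum g y)" for M'
  proof -
    obtain y g where y: "y \<in> Y" "vanishes_below (max M' M) y" and g: "g \<in> G" "0 < wsum g y"
      using pos by blast
    have "\<exists>g'\<in>G'. 0 < wsum g' y"
    proof (rule ccontr)
      assume "\<not> ?thesis"
      then have "\<forall>g'\<in>G'. wsum g' y \<le> 0"
        by (simp add: not_less)
      moreover have "vanishes_below M y"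
        using y(2) by (rule vanishes_below_mono) simp
      ultimately have "\<forall>g\<in>G. wsum g y \<le> C1 * 0"
        using dom y(1) by blast
      then show False
        using g by fastforce
    qed
    then show ?thesis
      using y vanishes_below_mono[OF y(2)] unfolding Y'_def by auto
  qed
  ultimately have "has_c0_sequence G' Y'"
    using sat lin' unfolding c0_saturated_def by blast
  then show ?thesis
    by (rule has_c0_sequence_if_equivalent[OF _ lin' _ G _ C]) (use pos dom rev in \<open>auto simp: Y'_def\<close>)
qed

lemma c0_saturated_by_dichotomy:
  fixes G' :: "nat \<Rightarrow> wset set" and P :: "nat \<Rightarrow> nat \<Rightarrow> nat"
  assumes G: "norming G" and sat: "\<And>p. c0_saturated (G' p)" and zero: "\<And>p. (1, {}) \<in> G' p"
    and rev: "\<And>p. \<exists>M C. 0 < C \<and> (\<forall>y. vanishes_below M y \<longrightarrow>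
       (\<forall>r. (\<forall>g\<in>G. wsum g y \<le> r) \<longrightarrow> (\<forall>g'\<in>G' p. wsum g' y \<le> C * r)))"
    and summable: "\<And>ys Mp. normalized_blocks G ys Mp \<Longrightarrow> Mp 0 = M\<^sub>0 \<Longrightarrow>
       \<forall>k. \<forall>g\<in>G' (P k (Mp k)). wsum g (ys k) \<le> (1/2)^k \<Longrightarrow>
       \<exists>C. \<forall>g\<in>G. \<forall>n. (\<Sum>j<n. wsum g (ys j)) \<le> C"
  shows "c0_saturated G"
  unfolding c0_saturated_def
proof (intro allI impI, elim conjE)
  fix Y assume lin: "lin_subspace Y" and tn: "\<forall>y\<in>Y. tail_null G y"
    and pos: "\<forall>M. \<exists>y\<in>Y. vanishes_below M y \<and> (\<exists>g\<in>G. 0 < wsum g y)"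
  show "has_c0_sequence G Y"
  proof (cases "\<exists>p M C. 0 < C \<and> (\<forall>y\<in>Y. vanishes_below M y \<longrightarrow>
      (\<forall>r. (\<forall>g'\<in>G' p. wsum g' y \<le> r) \<longrightarrow> (\<forall>g\<in>G. wsum g y \<le> C * r)))")
    case True
    then obtain p M1 C1 where C1: "0 < C1" and dom: "\<forall>y\<in>Y. vanishes_below M1 y \<longrightarrow>
        (\<forall>r. (\<forall>g'\<in>G' p. wsum g' y \<le> r) \<longrightarrow> (\<forall>g\<in>G. wsum g y \<le> C1 * r))"
      by blast
    obtain M2 C2 where C2: "0 < C2" and rev_p: "\<forall>y. vanishes_below M2 y \<longrightarrow>
        (\<forall>r. (\<forall>g\<in>G. wsum g y \<le> r) \<longrightarrow> (\<forall>g'\<in>G' p. wsum g' y \<le> C2 * r))"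
      using rev by blast
    have "vanishes_below M1 y" "vanishes_below M2 y" if "vanishes_below (max M1 M2) y" for y
      using that vanishes_below_mono by fastforce+
    then show ?thesis
      using has_c0_sequence_transfer[OF sat[of p] lin tn pos G C1 C2, of "max M1 M2"] dom rev_p by blast
  next
    case False
    then have "\<exists>y\<in>Y. vanishes_below M y \<and> (\<exists>r. (\<forall>g\<in>G' (P k M). wsum g y \<le> r) \<and> (\<exists>g\<in>G. C * r < wsum g y))"
      if "0 < C" for k M C
      using that by (fastforce simp: not_le)
    then obtain ys Mp where B: "normalized_blocks G ys Mp" "Mp 0 = M\<^sub>0"
      and ys: "\<forall>k. ys k \<in> Y \<and> (\<forall>g\<in>G' (P k (Mp k)). wsum g (ys k) \<le> (1/2)^k)"
      using normalized_blocks_exist[OF lin tn G zero, of "\<lambda>k M. P k M" M\<^sub>0] by blast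
    obtain C where "\<forall>g\<in>G. \<forall>n. (\<Sum>j<n. wsum g (ys j)) \<le> C"
      using summable[OF B] ys by blast
    then show ?thesis
      using has_c0_sequence_of_normalized_blocks[OF G B(1)] ys by blast
  qed
qed

section \<open>From \<open>c\<^sub>0\<close>-saturation to hereditarily \<open>c\<^sub>0\<close>\<close>

lemma completion_tail_null:
  assumes x: "x \<in> completion_c00 (fnorm G)" and G: "norming G"
  shows "tail_null G x"
proof -
  have "fnorm G x < \<infinity>"
    using x unfolding completion_c00_def by blast
  then obtain R where "fnorm G x < ereal R"
    using ereal_dense2 by blast
  then have "\<exists>R. \<forall>g\<in>G. wsum g x \<le> R"
    using fnorm_lessD by blast
  moreover have "\<exists>M. \<forall>g\<in>G. wsum g (tail_from M x) \<le> e" if "0 < e" for e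
  proof -
    obtain y where y: "y \<in> c00" "fnorm G (\<lambda>i. x i - y i) < ereal e"
      using x \<open>0 < e\<close> unfolding completion_c00_def by blast
    obtain M where M: "{i. y i \<noteq> 0} \<subseteq> {..<M}"
      using y(1) finite_nat_bounded unfolding c00_def by blast
    have "wsum g (tail_from M x) \<le> wsum g (\<lambda>i. x i - y i)" if "g \<in> G" for g
    proof (intro wsum_mono[OF norming_nonneg[OF G that]])
      fix i
      show "\<bar>tail_from M x i\<bar> \<le> \<bar>x i - y i\<bar>"
        using M by (cases "i < M") (auto simp: tail_from_def subset_iff not_less[symmetric])
    qed
    then have "\<forall>g\<in>G. wsum g (tail_from M x) \<le> e"
      using fnorm_lessD[OF y(2)] order_trans by blast
    then show ?thesis
      by blast
  qed
  ultimately show ?thesis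
    unfolding tail_null_def by blast
qed

definition lin_span :: "(nat \<Rightarrow> real) set \<Rightarrow> (nat \<Rightarrow> real) set" where
  "lin_span B = {(\<lambda>i. \<Sum>b\<in>B. c b * b i) | c. True}"

lemma lin_spanI: "x = (\<lambda>i. \<Sum>b\<in>B. c b * b i) \<Longrightarrow> x \<in> lin_span B"
  unfolding lin_span_def by blast

lemma lin_span_add:
  assumes "x \<in> lin_span B" "y \<in> lin_span B"
  shows "(\<lambda>i. x i + y i) \<in> lin_span B"
proof -
  obtain c d where "x = (\<lambda>i. \<Sum>b\<in>B. c b * b i)" "y = (\<lambda>i. \<Sum>b\<in>B. d b * b i)"
    using assms unfolding lin_span_def by blast
  then have "(\<lambda>i. x i + y i) = (\<lambda>i. \<Sum>b\<in>B. (c b + d b) * b i)"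
    by (simp add: sum.distrib distrib_right)
  then show ?thesis
    by (rule lin_spanI)
qed

lemma lin_span_scale:
  assumes "x \<in> lin_span B"
  shows "(\<lambda>i. s * x i) \<in> lin_span B"
proof -
  obtain c where "x = (\<lambda>i. \<Sum>b\<in>B. c b * b i)"
    using assms unfolding lin_span_def by blast
  then have "(\<lambda>i. s * x i) = (\<lambda>i. \<Sum>b\<in>B. (s * c b) * b i)"
    by (simp add: sum_distrib_left mult.assoc)
  then show ?thesis
    by (rule lin_spanI)
qed

lemma lin_span_mono: "finite B' \<Longrightarrow> B \<subseteq> B' \<Longrightarrow> lin_span B \<subseteq> lin_span B'"
proof
  fix x assume fin: "finite B'" and sub: "B \<subseteq> B'" and "x \<in> lin_span B"
  then obtain c where x: "x = (\<lambda>i. \<Sum>b\<in>B. c b * b i)"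
    unfolding lin_span_def by blast
  have "x = (\<lambda>i. \<Sum>b\<in>B'. (if b \<in> B then c b else 0) * b i)"
    unfolding x using fin sub by (auto intro!: sum.mono_neutral_cong_left)
  then show "x \<in> lin_span B'"
    by (rule lin_spanI)
qed

lemma lin_span_elem:
  assumes "finite B" "z \<in> B"
  shows "z \<in> lin_span B"
proof (rule lin_spanI[where c = "\<lambda>b. if b = z then 1 else 0"])
  have "(\<Sum>b\<in>B. (if b = z then 1 else 0) * b i) = z i" for i
    using assms by (simp add: if_distrib[of "\<lambda>c. c * _"] sum.delta' cong: if_cong)
  then show "z = (\<lambda>i. \<Sum>b\<in>B. (if b = z then 1 else 0) * b i)"
    by simp
qed

lemma lin_span_units:
  assumes "\<And>t. K \<le> t \<Longrightarrow> y t = 0"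
  shows "y \<in> lin_span ((\<lambda>t i. if i = t then 1 else 0) ` {..<K})"
proof (rule lin_spanI)
  define e :: "nat \<Rightarrow> nat \<Rightarrow> real" where "e = (\<lambda>t i. if i = t then 1 else 0)"
  have inj: "inj_on e {..<K}"
    by (intro inj_onI) (metis e_def zero_neq_one)
  have "(\<Sum>b\<in>e ` {..<K}. y (inv_into {..<K} e b) * b i) = y i" for i
  proof -
    have "(\<Sum>b\<in>e ` {..<K}. y (inv_into {..<K} e b) * b i) = (\<Sum>t<K. y t * e t i)"
      using inj by (simp add: sum.reindex)
    also have "\<dots> = y i"
      using assms[of i] by (cases "i < K")
        (simp_all add: e_def if_distrib[of "\<lambda>c. _ * c"] sum.delta cong: if_cong)
    finally show ?thesis .
  qed
  then show "y = (\<lambda>i. \<Sum>b\<in>e ` {..<K}. y (inv_into {..<K} e b) * b i)"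
    by simp
qed

lemma fin_dim_if_tail_part_spanned:
  assumes lin: "lin_subspace Y"
  shows "finite B0 \<Longrightarrow> \<forall>y\<in>Y. vanishes_below M y \<longrightarrow> y \<in> lin_span B0 \<Longrightarrow> fin_dim Y"
proof (induction M arbitrary: B0)
  case 0
  then show ?case
    unfolding fin_dim_def lin_span_def vanishes_below_def by blast
next
  case (Suc M)
  show ?case
  proof (cases "\<exists>z\<in>Y. vanishes_below M z \<and> z M \<noteq> 0")
    case True
    then obtain z where z: "z \<in> Y" "vanishes_below M z" "z M \<noteq> 0"
      by blast
    have fin: "finite (insert z B0)"
      using Suc.prems(1) by simp
    have "y \<in> lin_span (insert z B0)" if y: "y \<in> Y" "vanishes_below M y" for y
    proof -
      define y' where "y' i = y i + (- (y M / z M)) * z i" for i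
      have "y' \<in> Y"
        unfolding y'_def[abs_def] using lin y(1) z(1) by (intro lin_subspace_add lin_subspace_scale)
      moreover have "vanishes_below (Suc M) y'"
        using y(2) z unfolding vanishes_below_def y'_def by (auto simp: less_Suc_eq)
      ultimately have "y' \<in> lin_span (insert z B0)"
        using Suc.prems(2) lin_span_mono[OF fin] by blast
      moreover have "(\<lambda>i. (y M / z M) * z i) \<in> lin_span (insert z B0)"
        using lin_span_elem[OF fin] by (intro lin_span_scale) simp
      ultimately have "(\<lambda>i. y' i + (y M / z M) * z i) \<in> lin_span (insert z B0)"
        by (rule lin_span_add)
      then show ?thesis
        by (simp add: y'_def)
    qed
    then show ?thesis
      using Suc.IH fin by blast
  next
    case False
    then have "\<forall>y\<in>Y. vanishes_below M y \<longrightarrow> y \<in> lin_span B0"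
      using Suc.prems(2) unfolding vanishes_below_def by (auto simp: less_Suc_eq)
    then show ?thesis
      using Suc.IH Suc.prems(1) by blast
  qed
qed

lemma nonnull_far_out_if_infinite_dim:
  assumes lin: "lin_subspace Y" and inf: "\<not> fin_dim Y" and sing: "\<And>t. K \<le> t \<Longrightarrow> \<exists>\<theta>>0. (\<theta>, {t}) \<in> G"
  shows "\<exists>y\<in>Y. vanishes_below M y \<and> (\<exists>g\<in>G. 0 < wsum g y)"
proof (rule ccontr)
  assume "\<not> ?thesis"
  then have null: "wsum g y \<le> 0" if "y \<in> Y" "vanishes_below M y" "g \<in> G" for y g
    using that by (meson not_le)
  have "y \<in> lin_span ((\<lambda>t i. if i = t then 1 else 0) ` {..<K})" if "y \<in> Y" "vanishes_below M y" for y
  proof (rule lin_span_units)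
    fix t assume "K \<le> t"
    then obtain \<theta> where "0 < \<theta>" "(\<theta>, {t}) \<in> G"
      using sing by blast
    then show "y t = 0"
      using null[OF that, of "(\<theta>, {t})"] by (simp add: mult_le_0_iff)
  qed
  then show False
    using fin_dim_if_tail_part_spanned[OF lin, of _ M] inf by blast
qed

lemma c0_seq_bdd:
  assumes "x \<in> c0_seq"
  shows "bdd_above (range (\<lambda>i. \<bar>x i\<bar>))"
proof -
  have "Bseq x"
    using assms convergent_imp_Bseq convergentI unfolding c0_seq_def by blast
  then obtain K where "\<forall>i. norm (x i) \<le> K"
    by (auto simp: Bseq_def)
  then show ?thesis
    by (intro bdd_aboveI[where M = K]) auto
qed

lemma abs_le_sup_norm: "x \<in> c0_seq \<Longrightarrow> \<bar>x k\<bar> \<le> sup_norm x"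
  unfolding sup_norm_def using c0_seq_bdd by (auto intro: cSUP_upper)

lemma sup_norm_le: "(\<And>k. \<bar>x k\<bar> \<le> R) \<Longrightarrow> sup_norm x \<le> R"
  unfolding sup_norm_def by (rule cSUP_least) auto

lemma c0_seq_eventually_le:
  assumes "x \<in> c0_seq" "0 < s"
  shows "\<exists>n. \<forall>k\<ge>n. \<bar>x k\<bar> \<le> s"
proof -
  obtain n where "\<forall>k\<ge>n. norm (x k - 0) < s"
    using LIMSEQ_D assms unfolding c0_seq_def by blast
  then show ?thesis
    by (auto intro: less_imp_le)
qed

lemma lincomb_stable:
  assumes "\<And>k. vanishes_below k (ys k)" "i < m"
  shows "lincomb m x ys i = lincomb (Suc i) x ys i"
  unfolding lincomb_def using assms by (intro sum.mono_neutral_right) (auto simp: vanishes_below_def)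

lemma lincomb_diff:
  assumes "n \<le> m"
  shows "lincomb m x ys i - lincomb n x ys i = lincomb m (\<lambda>k. if n \<le> k then x k else 0) ys i"
proof -
  have "lincomb m x ys i =
      (\<Sum>k<m. (if n \<le> k then x k else 0) * ys k i + (if k < n then x k * ys k i else 0))"
    unfolding lincomb_def by (intro sum.cong) auto
  also have "\<dots> = lincomb m (\<lambda>k. if n \<le> k then x k else 0) ys i + (\<Sum>k<m. if k < n then x k * ys k i else 0)"
    unfolding lincomb_def by (simp add: sum.distrib)
  also have "(\<Sum>k<m. if k < n then x k * ys k i else 0) = (\<Sum>k\<in>{k\<in>{..<m}. k < n}. x k * ys k i)"
    by (rule sum.inter_filter[symmetric]) simp
  also have "{k\<in>{..<m}. k < n} = {..<n}"
    using assms by auto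
  finally show ?thesis
    unfolding lincomb_def by simp
qed

text \<open>Since \<open>ys k\<close> vanishes below \<open>k\<close>, this is the coordinatewise sum of the series
  \<open>\<Sum>k. x k * ys k\<close>.\<close>
definition c0_embedding :: "(nat \<Rightarrow> nat \<Rightarrow> real) \<Rightarrow> (nat \<Rightarrow> real) \<Rightarrow> nat \<Rightarrow> real" where
  "c0_embedding ys x i = lincomb (Suc i) x ys i"

lemma lin_on_c0_embedding: "lin_on V (c0_embedding ys)"
  unfolding lin_on_def c0_embedding_def lincomb_def
  by (auto simp: sum.distrib sum_distrib_left algebra_simps)

context
  fixes G :: "wset set" and ys :: "nat \<Rightarrow> nat \<Rightarrow> real" and a b :: real
  assumes G: "norming G" and ab: "0 < a" "0 < b" and ys: "\<forall>k. vanishes_below k (ys k)"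
    and upper: "\<forall>n c m. 0 \<le> m \<longrightarrow> (\<forall>k<n. \<bar>c k\<bar> \<le> m) \<longrightarrow> (\<forall>g\<in>G. wsum g (lincomb n c ys) \<le> b * m)"
    and lower: "\<forall>n c k. k < n \<longrightarrow> (\<forall>j<n. \<bar>c j\<bar> \<le> \<bar>c k\<bar>) \<longrightarrow> (\<exists>g\<in>G. a * \<bar>c k\<bar> \<le> wsum g (lincomb n c ys))"
begin

lemma c0_embedding_tail:
  assumes "0 \<le> s" "\<forall>k\<ge>n. \<bar>x k\<bar> \<le> s" "g \<in> G"
  shows "wsum g (\<lambda>i. c0_embedding ys x i - lincomb n x ys i) \<le> b * s"
proof -
  obtain k0 where k0: "snd g \<subseteq> {..<k0}"
    using finite_nat_bounded[OF norming_finite[OF G assms(3)]] by blast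
  define m where "m = max n k0"
  have "wsum g (\<lambda>i. c0_embedding ys x i - lincomb n x ys i) =
      wsum g (lincomb m (\<lambda>k. if n \<le> k then x k else 0) ys)"
  proof (rule wsum_cong)
    fix i assume "i \<in> snd g"
    then have "i < m"
      using k0 unfolding m_def by auto
    then have "c0_embedding ys x i = lincomb m x ys i"
      unfolding c0_embedding_def using lincomb_stable[OF ys[rule_format] \<open>i < m\<close>] by simp
    moreover have "n \<le> m"
      by (simp add: m_def)
    ultimately show
      "c0_embedding ys x i - lincomb n x ys i = lincomb m (\<lambda>k. if n \<le> k then x k else 0) ys i"
      using lincomb_diff by simp
  qed
  also have "\<dots> \<le> b * s"
    using upper assms by simp
  finally show ?thesis .
qed

lemma c0_embedding_approx:
  assumes "x \<in> c0_seq" "0 < e"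
  shows "\<exists>n. \<forall>g\<in>G. wsum g (\<lambda>i. c0_embedding ys x i - lincomb n x ys i) \<le> e"
proof -
  obtain n where "\<forall>k\<ge>n. \<bar>x k\<bar> \<le> e / b"
    using c0_seq_eventually_le[OF assms(1), of "e / b"] assms(2) ab(2) by auto
  then have "\<forall>g\<in>G. wsum g (\<lambda>i. c0_embedding ys x i - lincomb n x ys i) \<le> b * (e / b)"
    using c0_embedding_tail[of "e / b" n x] assms(2) ab(2) by simp
  then show ?thesis
    using ab(2) by auto
qed

lemma fnorm_c0_embedding_le: "x \<in> c0_seq \<Longrightarrow> fnorm G (c0_embedding ys x) \<le> ereal (b * sup_norm x)"
  unfolding fnorm_le_iff using c0_embedding_tail[of "sup_norm x" 0 x] abs_le_sup_norm[of x]
  by (simp add: lincomb_def order_trans[OF _ abs_le_sup_norm])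

lemma c0_embedding_coordinate_le:
  assumes x: "x \<in> c0_seq" and R: "\<forall>g\<in>G. wsum g (c0_embedding ys x) \<le> R"
  shows "a * \<bar>x k\<bar> \<le> R"
proof (rule field_le_epsilon)
  fix \<epsilon> :: real assume "0 < \<epsilon>"
  obtain n1 where n1: "\<forall>j\<ge>n1. \<bar>x j\<bar> \<le> \<epsilon> / b"
    using c0_seq_eventually_le[OF x, of "\<epsilon> / b"] \<open>0 < \<epsilon>\<close> ab(2) by auto
  define n where "n = max n1 (Suc k)"
  have tail: "\<forall>g\<in>G. wsum g (\<lambda>i. c0_embedding ys x i - lincomb n x ys i) \<le> \<epsilon>"
    using c0_embedding_tail[of "\<epsilon> / b" n x] n1 \<open>0 < \<epsilon>\<close> ab(2) unfolding n_def by simp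
  obtain j0 where j0: "j0 < n" "\<forall>j<n. \<bar>x j\<bar> \<le> \<bar>x j0\<bar>"
  proof -
    have "Max ((\<lambda>j. \<bar>x j\<bar>) ` {..<n}) \<in> (\<lambda>j. \<bar>x j\<bar>) ` {..<n}"
      by (rule Max_in) (auto simp: n_def lessThan_empty_iff)
    then obtain j0 where "j0 < n" "\<bar>x j0\<bar> = Max ((\<lambda>j. \<bar>x j\<bar>) ` {..<n})"
      by auto
    moreover have "\<bar>x j\<bar> \<le> Max ((\<lambda>j. \<bar>x j\<bar>) ` {..<n})" if "j < n" for j
      using that by (intro Max_ge) auto
    ultimately show thesis
      by (intro that[of j0]) auto
  qed
  obtain g where g: "g \<in> G" "a * \<bar>x j0\<bar> \<le> wsum g (lincomb n x ys)"
    using lower j0 by blast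
  have "wsum g (lincomb n x ys) =
      wsum g (\<lambda>i. c0_embedding ys x i + (lincomb n x ys i - c0_embedding ys x i))"
    by simp
  also have "\<dots> \<le> wsum g (c0_embedding ys x) + wsum g (\<lambda>i. c0_embedding ys x i - lincomb n x ys i)"
    using wsum_add[OF norming_nonneg[OF G g(1)]] wsum_diff_commute by metis
  also have "\<dots> \<le> R + \<epsilon>"
    using R tail g(1) by (meson add_mono)
  finally have "a * \<bar>x j0\<bar> \<le> R + \<epsilon>"
    using g(2) by linarith
  moreover have "a * \<bar>x k\<bar> \<le> a * \<bar>x j0\<bar>"
    using j0(2) ab(1) unfolding n_def by (simp add: mult_left_mono)
  ultimately show "a * \<bar>x k\<bar> \<le> R + \<epsilon>"
    by linarith
qed

lemma fnorm_c0_embedding_ge: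
  assumes x: "x \<in> c0_seq"
  shows "ereal (a * sup_norm x) \<le> fnorm G (c0_embedding ys x)"
proof (rule ccontr)
  assume "\<not> ?thesis"
  then obtain e where e: "fnorm G (c0_embedding ys x) < ereal e" "e < a * sup_norm x"
    using ereal_dense2[of "fnorm G (c0_embedding ys x)" "ereal (a * sup_norm x)"] by (auto simp: not_le)
  then have "a * \<bar>x k\<bar> \<le> e" for k
    using c0_embedding_coordinate_le[OF x] fnorm_lessD by blast
  then have "sup_norm x \<le> e / a"
    using ab(1) by (intro sup_norm_le) (simp add: pos_le_divide_eq mult.commute)
  then show False
    using e(2) ab(1) by (simp add: pos_le_divide_eq mult.commute)
qed

lemma c0_embedding_in_subspace:
  assumes x: "x \<in> c0_seq" and comb: "\<And>n. lincomb n x ys \<in> Y" and Y: "Y \<subseteq> completion_c00 (fnorm G)"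
    and closed: "N_closed_in (fnorm G) (completion_c00 (fnorm G)) Y"
  shows "c0_embedding ys x \<in> Y"
proof -
  have "\<exists>z\<in>Y. fnorm G (\<lambda>i. c0_embedding ys x i - z i) < ereal e" if e: "0 < e" for e
  proof -
    obtain n where "\<forall>g\<in>G. wsum g (\<lambda>i. c0_embedding ys x i - lincomb n x ys i) \<le> e / 2"
      using c0_embedding_approx[OF x, of "e / 2"] e by auto
    then have "fnorm G (\<lambda>i. c0_embedding ys x i - lincomb n x ys i) < ereal e"
      using e by (intro fnorm_lessI[of _ _ "e / 2"]) auto
    then show ?thesis
      using comb by blast
  qed
  moreover have "\<exists>z\<in>c00. fnorm G (\<lambda>i. c0_embedding ys x i - z i) < ereal e" if "0 < e" for e
  proof -
    obtain n where n: "\<forall>g\<in>G. wsum g (\<lambda>i. c0_embedding ys x i - lincomb n x ys i) \<le> e / 4"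
      using c0_embedding_approx[OF x, of "e / 4"] \<open>0 < e\<close> by auto
    have "lincomb n x ys \<in> completion_c00 (fnorm G)"
      using comb Y by blast
    moreover have "0 < e / 4"
      using \<open>0 < e\<close> by simp
    ultimately obtain z where z: "z \<in> c00" "fnorm G (\<lambda>i. lincomb n x ys i - z i) < ereal (e / 4)"
      unfolding completion_c00_def by blast
    have "wsum g (\<lambda>i. c0_embedding ys x i - z i) \<le> e / 4 + e / 4" if "g \<in> G" for g
      using wsum_add[OF norming_nonneg[OF G that], of "\<lambda>i. c0_embedding ys x i - lincomb n x ys i"
          "\<lambda>i. lincomb n x ys i - z i"] n fnorm_lessD[OF z(2) that] that by fastforce
    then have "fnorm G (\<lambda>i. c0_embedding ys x i - z i) < ereal e"
      using \<open>0 < e\<close> by (intro fnorm_lessI[of _ _ "e / 2"]) auto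
    then show ?thesis
      using z(1) by blast
  qed
  moreover have "fnorm G (c0_embedding ys x) < \<infinity>"
    using fnorm_c0_embedding_le[OF x] by (rule le_less_trans) simp
  ultimately show ?thesis
    using closed unfolding N_closed_in_def completion_c00_def by blast
qed

end

lemma contains_c0_if_has_c0_sequence:
  assumes G: "norming G" and c0: "has_c0_sequence G Y" and lin: "lin_subspace Y"
    and Y: "Y \<subseteq> completion_c00 (fnorm G)"
    and closed: "N_closed_in (fnorm G) (completion_c00 (fnorm G)) Y"
  shows "contains_c0 (fnorm G) Y"
proof -
  obtain ys a b where ab: "0 < a" "0 < b" and ys: "\<forall>k. ys k \<in> Y \<and> vanishes_below k (ys k)"
    and up: "\<forall>n c m. 0 \<le> m \<longrightarrow> (\<forall>k<n. \<bar>c k\<bar> \<le> m) \<longrightarrow> (\<forall>g\<in>G. wsum g (lincomb n c ys) \<le> b * m)"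
    and lo: "\<forall>n c k. k < n \<longrightarrow> (\<forall>j<n. \<bar>c j\<bar> \<le> \<bar>c k\<bar>) \<longrightarrow> (\<exists>g\<in>G. a * \<bar>c k\<bar> \<le> wsum g (lincomb n c ys))"
    using c0 unfolding has_c0_sequence_def by blast
  have ys': "\<forall>k. vanishes_below k (ys k)"
    using ys by blast
  have "c0_embedding ys x \<in> Y" if "x \<in> c0_seq" for x
    using c0_embedding_in_subspace[OF G ab ys' up lo that _ Y closed] lincomb_in_subspace[OF lin] ys
    by blast
  moreover have "ereal (a * sup_norm x) \<le> fnorm G (c0_embedding ys x) \<and>
      fnorm G (c0_embedding ys x) \<le> ereal (b * sup_norm x)" if "x \<in> c0_seq" for x
    using fnorm_c0_embedding_ge[OF G ab ys' up lo that] fnorm_c0_embedding_le[OF G ab ys' up lo that]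
    by blast
  ultimately show ?thesis
    unfolding contains_c0_def using lin_on_c0_embedding[of c0_seq ys] ab by blast
qed

lemma hereditarily_c0_if_c0_saturated:
  assumes sat: "c0_saturated G" and G: "norming G" and sing: "\<exists>K. \<forall>t\<ge>K. \<exists>\<theta>>0. (\<theta>, {t}) \<in> G"
  shows "hereditarily_c0 (fnorm G)"
  unfolding hereditarily_c0_def
proof (intro allI impI, elim conjE)
  fix Y assume Y: "Y \<subseteq> completion_c00 (fnorm G)" and lin: "lin_subspace Y"
    and closed: "N_closed_in (fnorm G) (completion_c00 (fnorm G)) Y" and inf: "\<not> fin_dim Y"
  have "\<forall>y\<in>Y. tail_null G y"
    using Y completion_tail_null[OF _ G] by blast
  moreover have "\<forall>M. \<exists>y\<in>Y. vanishes_below M y \<and> (\<exists>g\<in>G. 0 < wsum g y)"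
    using sing nonnull_far_out_if_infinite_dim[OF lin inf] by blast
  ultimately have "has_c0_sequence G Y"
    using sat lin unfolding c0_saturated_def by blast
  then show "contains_c0 (fnorm G) Y"
    by (rule contains_c0_if_has_c0_sequence[OF G _ lin Y closed])
qed

section \<open>Transfinite families\<close>

lemma ord_cases [case_names least succ limit]:
  fixes \<alpha> :: "'o::wellorder"
  obtains "ord_least \<alpha>" | \<beta> where "ord_succ_of \<alpha> \<beta>" | "ord_limit \<alpha>"
  unfolding ord_limit_def by blast

lemma ord_succ_of_less: "ord_succ_of \<alpha> \<beta> \<Longrightarrow> \<beta> < \<alpha>"
  unfolding ord_succ_of_def by blast

text \<open>Finite sets of
  levels are needed because a limit level is compared with the levels in \<open>A n \<alpha>\<close>; the
  functional \<open>(1, {})\<close> only keeps the set nonempty when \<open>B = {}\<close>.\<close>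
definition schreier_fns :: "('o \<Rightarrow> nat set set) \<Rightarrow> 'o set \<Rightarrow> wset set" where
  "schreier_fns F B = insert (1, {}) {(1, E) | E \<beta>. \<beta> \<in> B \<and> E \<in> F \<beta>}"

text \<open>With \<open>l = (\<lambda>_. 0)\<close> this is the norming set of the mixed norm without the restriction
  \<open>l n \<le> min E\<close>.\<close>
definition mixed_fns :: "('o \<Rightarrow> nat set set) \<Rightarrow> (nat \<Rightarrow> real) \<Rightarrow> (nat \<Rightarrow> 'o) \<Rightarrow> (nat \<Rightarrow> nat) \<Rightarrow> wset set" where
  "mixed_fns F \<Theta> \<alpha>s l = {(\<Theta> n, E) | n E. E \<in> F (\<alpha>s n) \<and> (\<forall>i\<in>E. l n \<le> i)}"

lemma schreier_fns_iff:
  "g \<in> schreier_fns F B \<longleftrightarrow> g = (1, {}) \<or> (\<exists>E \<beta>. g = (1, E) \<and> \<beta> \<in> B \<and> E \<in> F \<beta>)"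
  unfolding schreier_fns_def by blast

lemma schreier_fnsI: "\<beta> \<in> B \<Longrightarrow> E \<in> F \<beta> \<Longrightarrow> (1, E) \<in> schreier_fns F B"
  and schreier_fns_empty: "(1, {}) \<in> schreier_fns F B"
  unfolding schreier_fns_def by blast+

lemma mixed_fns_eq_Union: "mixed_fns F \<Theta> \<alpha>s l = (\<Union>n. (\<lambda>E. (\<Theta> n, E)) ` {E\<in>F (\<alpha>s n). \<forall>i\<in>E. l n \<le> i})"
  unfolding mixed_fns_def by auto

lemma SUP_weighted_eq_fnorm:
  assumes \<Theta>: "\<And>n. 0 < \<Theta> n" and S: "\<And>n. S n \<noteq> {}"
  shows "(SUP n. ereal (\<Theta> n) * (SUP E\<in>S n. ereal (\<Sum>i\<in>E. \<bar>x i\<bar>))) =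
    fnorm (\<Union>n. (\<lambda>E. (\<Theta> n, E)) ` S n) x"
proof -
  have "(SUP E\<in>S n. ereal (\<Theta> n) * ereal (\<Sum>i\<in>E. \<bar>x i\<bar>)) =
      ereal (\<Theta> n) * (SUP E\<in>S n. ereal (\<Sum>i\<in>E. \<bar>x i\<bar>))" for n
    using S \<Theta> by (intro SUP_ereal_mult_left) (auto simp: sum_nonneg less_imp_le)
  then show ?thesis
    unfolding fnorm_def SUP_UNION by (simp add: image_image wsum_def)
qed

context
  fixes A :: "nat \<Rightarrow> 'o::wellorder \<Rightarrow> 'o set" and F :: "'o \<Rightarrow> nat set set"
  assumes fam: "transfinite_family A F"
begin

lemma family_least: "ord_least \<alpha> \<Longrightarrow> F \<alpha> = {{}}"
  and family_succ: "ord_succ_of \<alpha> \<beta> \<Longrightarrow> F \<alpha> = {insert n E | n E. E \<in> F \<beta>} \<union> {{}}"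
  and family_limit: "ord_limit \<alpha> \<Longrightarrow>
     F \<alpha> = {{}} \<union> {E. E \<noteq> {} \<and> finite E \<and> (\<exists>\<beta>\<in>A (Min E) \<alpha>. E \<in> F \<beta>)}"
  and limit_approx_finite: "ord_limit \<alpha> \<Longrightarrow> finite (A n \<alpha>)"
  and limit_approx_less: "ord_limit \<alpha> \<Longrightarrow> A n \<alpha> \<subseteq> {..<\<alpha>}"
  and limit_approx_cofinal: "ord_limit \<alpha> \<Longrightarrow> \<beta> < \<alpha> \<Longrightarrow> \<exists>n. \<exists>\<gamma>\<in>A n \<alpha>. \<beta> \<le> \<gamma>"
  using fam by (simp_all add: transfinite_family_def)

lemma limit_approx_mono: "ord_limit \<alpha> \<Longrightarrow> n \<le> m \<Longrightarrow> A n \<alpha> \<subseteq> A m \<alpha>"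
  using fam lift_Suc_mono_le[of "\<lambda>n. A n \<alpha>"] by (simp add: transfinite_family_def)

lemma empty_in_family: "{} \<in> F \<alpha>"
  by (cases \<alpha> rule: ord_cases) (simp_all add: family_least family_succ family_limit)

lemma family_finite: "E \<in> F \<alpha> \<Longrightarrow> finite E"
proof (induction \<alpha> arbitrary: E rule: less_induct)
  case (less \<alpha>)
  show ?case
  proof (cases \<alpha> rule: ord_cases)
    case (succ \<beta>)
    then show ?thesis
      using less family_succ[OF succ] ord_succ_of_less[OF succ] by auto
  qed (use less family_least family_limit in auto)
qed

lemma family_succ_subset:
  assumes succ: "ord_succ_of \<alpha> \<beta>"
  shows "F \<beta> \<subseteq> F \<alpha>"
proof
  fix E assume E: "E \<in> F \<beta>"
  show "E \<in> F \<alpha>"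
  proof (cases "E = {}")
    case False
    then obtain n where "E = insert n E"
      by blast
    then show ?thesis
      using E family_succ[OF succ] by blast
  qed (simp add: empty_in_family)
qed

lemma succ_family_memI:
  assumes succ: "ord_succ_of \<alpha> \<beta>" and E: "E - {n} \<in> F \<beta>"
  shows "E \<in> F \<alpha>"
proof (cases "n \<in> E")
  case True
  then have "E = insert n (E - {n})"
    by blast
  then show ?thesis
    using E family_succ[OF succ] by blast
next
  case False
  then show ?thesis
    using E family_succ_subset[OF succ] by auto
qed

lemma limit_family_memI:
  assumes "ord_limit \<alpha>" "E \<noteq> {}" "\<beta> \<in> A n \<alpha>" "E \<in> F \<beta>" "\<forall>i\<in>E. n \<le> i"
  shows "E \<in> F \<alpha>"
proof -
  have "finite E"
    using family_finite assms(4) .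
  then have "\<beta> \<in> A (Min E) \<alpha>"
    using limit_approx_mono[OF assms(1), of n "Min E"] assms by auto
  then show ?thesis
    using assms \<open>finite E\<close> by (subst family_limit) auto
qed

lemma family_subset_closed: "E \<in> F \<alpha> \<Longrightarrow> E' \<subseteq> E \<Longrightarrow> E' \<in> F \<alpha>"
proof (induction \<alpha> arbitrary: E E' rule: less_induct)
  case (less \<alpha>)
  show ?case
  proof (cases \<alpha> rule: ord_cases)
    case least
    then show ?thesis
      using less.prems family_least by auto
  next
    case (succ \<beta>)
    show ?thesis
    proof (cases "E = {}")
      case False
      then obtain n E0 where E: "E = insert n E0" "E0 \<in> F \<beta>"
        using less.prems(1) family_succ[OF succ] by auto
      have "E' - {n} \<in> F \<beta>"
        using less.IH[OF ord_succ_of_less[OF succ] E(2)] E(1) less.prems(2) by blast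
      then show ?thesis
        by (rule succ_family_memI[OF succ])
    qed (use less.prems empty_in_family in auto)
  next
    case limit
    show ?thesis
    proof (cases "E' = {}")
      case False
      then obtain \<beta> where \<beta>: "\<beta> \<in> A (Min E) \<alpha>" "E \<in> F \<beta>"
        using less.prems family_limit[OF limit] by auto
      have "E' \<in> F \<beta>"
        using less.IH[OF _ \<beta>(2) less.prems(2)] \<beta>(1) limit_approx_less[OF limit] by blast
      moreover have "\<forall>i\<in>E'. Min E \<le> i"
        using less.prems family_finite by auto
      ultimately show ?thesis
        by (rule limit_family_memI[OF limit False \<beta>(1)])
    qed (use empty_in_family in simp)
  qed
qed

lemma singletons_eventually_in_family: "\<not> ord_least \<alpha> \<Longrightarrow> \<exists>K. \<forall>m\<ge>K. {m} \<in> F \<alpha>"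
proof (induction \<alpha> rule: less_induct)
  case (less \<alpha>)
  show ?case
  proof (cases \<alpha> rule: ord_cases)
    case (succ \<beta>)
    then show ?thesis
      using empty_in_family family_succ[OF succ] by blast
  next
    case limit
    define \<beta>\<^sub>0 where "\<beta>\<^sub>0 = (LEAST x::'o. True)"
    have "\<beta>\<^sub>0 \<le> \<beta>" for \<beta>
      unfolding \<beta>\<^sub>0_def by (rule Least_le) simp
    moreover obtain \<beta> where "\<beta> < \<alpha>"
      using less.prems unfolding ord_least_def by (auto simp: not_le)
    ultimately have "\<beta>\<^sub>0 < \<alpha>"
      using le_less_trans by blast
    then obtain \<gamma> where \<gamma>: "\<beta>\<^sub>0 < \<gamma>" "\<gamma> < \<alpha>"
      using limit unfolding ord_limit_def ord_succ_of_def by blast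
    then obtain n \<gamma>' where \<gamma>': "\<gamma>' \<in> A n \<alpha>" "\<gamma> \<le> \<gamma>'"
      using limit_approx_cofinal[OF limit] by blast
    have "\<not> ord_least \<gamma>'"
      using \<gamma> \<gamma>'(2) unfolding ord_least_def by (meson leD order_trans)
    then obtain K where K: "\<forall>m\<ge>K. {m} \<in> F \<gamma>'"
      using less.IH \<gamma>'(1) limit_approx_less[OF limit] by blast
    have "{m} \<in> F \<alpha>" if "max K n \<le> m" for m
      using limit_family_memI[OF limit _ \<gamma>'(1)] K that by auto
    then show ?thesis
      by blast
  qed (use less.prems in blast)
qed

subsection \<open>Schreier families\<close>

lemma norming_schreier_fns: "norming (schreier_fns F B)"
  unfolding norming_def schreier_fns_def using family_finite by auto

lemma schreier_succ_summable:
  assumes succ: "ord_succ_of \<gamma> \<beta>"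
    and B: "normalized_blocks (schreier_fns F (insert \<gamma> B0)) ys Mp"
    and small: "\<forall>k. \<forall>g\<in>schreier_fns F (insert \<beta> B0). wsum g (ys k) \<le> (1/2)^k"
    and g: "g \<in> schreier_fns F (insert \<gamma> B0)"
  shows "(\<Sum>j<n. wsum g (ys j)) \<le> 10"
proof (cases "g \<in> schreier_fns F (insert \<beta> B0)")
  case True
  then have "(\<Sum>j<n. wsum g (ys j)) \<le> 8"
    using small by (intro sum_le_8_if_geometric) blast
  then show ?thesis
    by simp
next
  case False
  then obtain E where "g = (1, E)" "E \<in> F \<gamma>" "E \<noteq> {}"
    using g schreier_fns_empty by (auto simp: schreier_fns_iff)
  then obtain m E0 where g_eq: "g = (1, insert m E0)" and E0: "E0 \<in> F \<beta>"
    using family_succ[OF succ] by auto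
  have "{m} \<in> F \<gamma>"
    using family_succ[OF succ] empty_in_family by blast
  then have sing: "(1, {m}) \<in> schreier_fns F (insert \<gamma> B0)"
    by (rule schreier_fnsI[rotated]) simp
  have "(\<Sum>j<n. \<bar>ys j m\<bar>) \<le> 8"
  proof (rule sum_le_8_threshold[where P = "\<lambda>j. Mp j \<le> m" and c = "\<lambda>_. 0"])
    show "\<bar>ys j m\<bar> \<le> (1/2)^j" if "\<not> Mp j \<le> m" for j
      using normalized_blocksD(2)[OF B, of j] that by (simp add: vanishes_below_def)
    show "\<bar>ys j m\<bar> \<le> 1" for j
      using normalized_blocksD(3)[OF B sing, of j] by simp
    show "\<bar>ys j m\<bar> \<le> 0 + (1/2)^(j+3)" if "j < j'" "Mp j' \<le> m" for j j'
      using normalized_blocks_beyond[OF B sing, of j] that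
        strict_mono_less_eq[OF normalized_blocksD(1)[OF B], of "Suc j" j'] by simp
  qed simp
  moreover have "wsum g (ys j) \<le> \<bar>ys j m\<bar> + (1/2)^j" for j
    using wsum_insert_le[OF family_finite[OF E0]] small schreier_fnsI[where F = F, OF insertI1 E0] g_eq
    by (meson add_left_mono order_trans)
  then have "(\<Sum>j<n. wsum g (ys j)) \<le> (\<Sum>j<n. \<bar>ys j m\<bar>) + (\<Sum>j<n. (1/2)^j)"
    by (simp add: sum.distrib[symmetric] sum_mono)
  ultimately show ?thesis
    using half_power_sum_le[of n] by linarith
qed

lemma c0_saturated_schreier_succ:
  assumes succ: "ord_succ_of \<gamma> \<beta>" and sat: "c0_saturated (schreier_fns F (insert \<beta> B0))"
  shows "c0_saturated (schreier_fns F (insert \<gamma> B0))"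
proof (rule c0_saturated_by_dichotomy[where G' = "\<lambda>_. schreier_fns F (insert \<beta> B0)" and M\<^sub>0 = 0])
  have "schreier_fns F (insert \<beta> B0) \<subseteq> schreier_fns F (insert \<gamma> B0)"
    using family_succ_subset[OF succ] unfolding schreier_fns_def by blast
  then show "\<exists>M C. 0 < C \<and> (\<forall>y. vanishes_below M y \<longrightarrow> (\<forall>r. (\<forall>g\<in>schreier_fns F (insert \<gamma> B0). wsum g y \<le> r)
      \<longrightarrow> (\<forall>g'\<in>schreier_fns F (insert \<beta> B0). wsum g' y \<le> C * r)))" for p
    by (intro exI[of _ 0] exI[of _ 1]) auto
  show "\<exists>C. \<forall>g\<in>schreier_fns F (insert \<gamma> B0). \<forall>n. (\<Sum>j<n. wsum g (ys j)) \<le> C"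
    if "normalized_blocks (schreier_fns F (insert \<gamma> B0)) ys Mp" "Mp 0 = 0"
      "\<forall>k. \<forall>g\<in>schreier_fns F (insert \<beta> B0). wsum g (ys k) \<le> (1/2)^k" for ys Mp
    using schreier_succ_summable[OF succ that(1) that(3)] by blast
qed (use sat norming_schreier_fns schreier_fns_empty in auto)

lemma schreier_limit_summable:
  assumes lim: "ord_limit \<gamma>" and B: "normalized_blocks (schreier_fns F (insert \<gamma> B0)) ys Mp"
    and small: "\<forall>k. \<forall>g\<in>schreier_fns F (B0 \<union> A (Mp k) \<gamma>). wsum g (ys k) \<le> (1/2)^k"
    and g: "g \<in> schreier_fns F (insert \<gamma> B0)"
  shows "(\<Sum>j<n. wsum g (ys j)) \<le> 8"
proof (cases "g \<in> schreier_fns F B0")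
  case True
  then have "g \<in> schreier_fns F (B0 \<union> A (Mp k) \<gamma>)" for k
    by (auto simp: schreier_fns_iff)
  then show ?thesis
    using small by (intro sum_le_8_if_geometric) blast
next
  case False
  then obtain E where g_eq: "g = (1, E)" and "E \<in> F \<gamma>" "E \<noteq> {}"
    using g schreier_fns_empty by (auto simp: schreier_fns_iff)
  then obtain \<beta> where E: "\<beta> \<in> A (Min E) \<gamma>" "E \<in> F \<beta>"
    using family_limit[OF lim] by auto
  show ?thesis
  proof (rule sum_le_8_threshold[where P = "\<lambda>j. Mp j \<le> Min E" and c = "\<lambda>_. 0"])
    show "wsum g (ys j) \<le> (1/2)^j" if "\<not> Mp j \<le> Min E" for j
    proof -
      have "\<beta> \<in> A (Mp j) \<gamma>"
        using limit_approx_mono[OF lim, of "Min E" "Mp j"] E(1) that by auto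
      then show ?thesis
        using small schreier_fnsI[where F = F, OF _ E(2)] g_eq by blast
    qed
    show "wsum g (ys j) \<le> 1" for j
      using normalized_blocksD(3)[OF B g] .
    show "wsum g (ys j) \<le> 0 + (1/2)^(j+3)" if "j < j'" "Mp j' \<le> Min E" for j j'
    proof -
      have "Mp (Suc j) \<le> Min E"
        using that strict_mono_less_eq[OF normalized_blocksD(1)[OF B], of "Suc j" j'] by simp
      then have "\<forall>i\<in>snd g. Mp (Suc j) \<le> i"
        using family_finite[OF E(2)] g_eq by (fastforce intro: order_trans[OF _ Min_le])
      then show ?thesis
        using normalized_blocks_beyond[OF B g] by simp
    qed
  qed simp
qed

lemma schreier_limit_dominates:
  assumes lim: "ord_limit \<gamma>" and y: "vanishes_below p y"
    and r: "\<forall>g\<in>schreier_fns F (insert \<gamma> B0). wsum g y \<le> r"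
    and g': "g' \<in> schreier_fns F (B0 \<union> A p \<gamma>)"
  shows "wsum g' y \<le> r"
proof -
  have "0 \<le> r"
    using r schreier_fns_empty by fastforce
  consider "g' \<in> schreier_fns F (insert \<gamma> B0)" | E \<beta> where "g' = (1, E)" "\<beta> \<in> A p \<gamma>" "E \<in> F \<beta>"
    using g' by (auto simp: schreier_fns_iff)
  then show ?thesis
  proof cases
    case 1
    then show ?thesis
      using r by blast
  next
    case 2
    define E' where "E' = {i\<in>E. p \<le> i}"
    have "wsum g' y = wsum (1, E') y"
      unfolding E'_def 2(1) using wsum_restrict_vanishing[OF family_finite[OF 2(3)] y] .
    moreover have "wsum (1, E') y \<le> r"
    proof (cases "E' = {}")
      case False
      have "E' \<in> F \<beta>"
        unfolding E'_def by (rule family_subset_closed[OF 2(3)]) blast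
      then have "E' \<in> F \<gamma>"
        using limit_family_memI[OF lim False 2(2)] unfolding E'_def by blast
      then show ?thesis
        using r schreier_fnsI[where F = F, OF insertI1] by blast
    qed (use \<open>0 \<le> r\<close> in simp)
    ultimately show ?thesis
      by simp
  qed
qed

lemma c0_saturated_schreier_limit:
  assumes lim: "ord_limit \<gamma>" and sat: "\<And>n. c0_saturated (schreier_fns F (B0 \<union> A n \<gamma>))"
  shows "c0_saturated (schreier_fns F (insert \<gamma> B0))"
proof (rule c0_saturated_by_dichotomy[where G' = "\<lambda>p. schreier_fns F (B0 \<union> A p \<gamma>)"
      and P = "\<lambda>_ M. M" and M\<^sub>0 = 0])
  show "\<exists>M C. 0 < C \<and> (\<forall>y. vanishes_below M y \<longrightarrow> (\<forall>r. (\<forall>g\<in>schreier_fns F (insert \<gamma> B0). wsum g y \<le> r)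
      \<longrightarrow> (\<forall>g'\<in>schreier_fns F (B0 \<union> A p \<gamma>). wsum g' y \<le> C * r)))" for p
    using schreier_limit_dominates[OF lim] by (intro exI[of _ p] exI[of _ 1]) auto
  show "\<exists>C. \<forall>g\<in>schreier_fns F (insert \<gamma> B0). \<forall>n. (\<Sum>j<n. wsum g (ys j)) \<le> C"
    if "normalized_blocks (schreier_fns F (insert \<gamma> B0)) ys Mp" "Mp 0 = 0"
      "\<forall>k. \<forall>g\<in>schreier_fns F (B0 \<union> A (Mp k) \<gamma>). wsum g (ys k) \<le> (1/2)^k" for ys Mp
    using schreier_limit_summable[OF lim that(1) that(3)] by blast
qed (use sat norming_schreier_fns schreier_fns_empty in auto)

lemma c0_saturated_schreier_fns_insert:
  assumes IH: "\<And>B'. finite B' \<Longrightarrow> \<forall>\<beta>\<in>B'. \<beta> < \<gamma> \<Longrightarrow> c0_saturated (schreier_fns F B')"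
    and B0: "finite B0" "\<forall>\<beta>\<in>B0. \<beta> < \<gamma>"
  shows "c0_saturated (schreier_fns F (insert \<gamma> B0))"
proof (cases \<gamma> rule: ord_cases)
  case least
  then have "B0 = {}"
    using B0(2) unfolding ord_least_def by (meson all_not_in_conv leD)
  then show ?thesis
    using family_least[OF least] by (intro c0_saturated_if_null) (auto simp: schreier_fns_def)
next
  case (succ \<beta>)
  then show ?thesis
    using c0_saturated_schreier_succ[OF succ IH] B0 ord_succ_of_less[OF succ] by auto
next
  case limit
  have "c0_saturated (schreier_fns F (B0 \<union> A n \<gamma>))" for n
    using IH[of "B0 \<union> A n \<gamma>"] B0 limit_approx_finite[OF limit] limit_approx_less[OF limit] by blast
  then show ?thesis
    by (rule c0_saturated_schreier_limit[OF limit])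
qed

lemma c0_saturated_schreier_fns_below:
  "finite B \<Longrightarrow> \<forall>\<beta>\<in>B. \<beta> \<le> \<gamma> \<Longrightarrow> c0_saturated (schreier_fns F B)"
proof (induction \<gamma> arbitrary: B rule: less_induct)
  case (less \<gamma>)
  have IH: "c0_saturated (schreier_fns F B')" if "finite B'" "\<forall>\<beta>\<in>B'. \<beta> < \<gamma>" for B'
  proof (cases "B' = {}")
    case True
    then show ?thesis
      by (intro c0_saturated_if_null) (simp add: schreier_fns_def)
  next
    case False
    then show ?thesis
      using less.IH[of "Max B'" B'] that by simp
  qed
  show ?case
  proof (cases "\<gamma> \<in> B")
    case False
    then show ?thesis
      using IH less.prems by (auto simp: le_less)
  next
    case True
    then have "B = insert \<gamma> (B - {\<gamma>})"
      by blast
    moreover have "c0_saturated (schreier_fns F (insert \<gamma> (B - {\<gamma>})))"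
      using less.prems by (intro c0_saturated_schreier_fns_insert IH) (auto simp: le_less)
    ultimately show ?thesis
      by simp
  qed
qed

lemma c0_saturated_schreier_fns: "finite B \<Longrightarrow> c0_saturated (schreier_fns F B)"
  using c0_saturated_schreier_fns_below[of B "Max B"] c0_saturated_if_null[of "schreier_fns F {}"]
  by (cases "B = {}") (auto simp: schreier_fns_def)

subsection \<open>Mixed families\<close>

lemma norming_mixed_fns: "(\<And>n. 0 < \<Theta> n) \<Longrightarrow> norming (mixed_fns F \<Theta> \<alpha>s l)"
  unfolding norming_def mixed_fns_def using family_finite by (fastforce intro: less_imp_le)

lemma mixed_fns_empty: "(\<Theta> 0, {}) \<in> mixed_fns F \<Theta> \<alpha>s l"
  unfolding mixed_fns_def using empty_in_family by blast

lemma mixed_dominates_schreier: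
  assumes \<Theta>: "\<And>n. 0 < \<Theta> n" "decseq \<Theta>" and l: "mono l"
    and y: "vanishes_below (l p) y" and r: "\<forall>g\<in>mixed_fns F \<Theta> \<alpha>s l. wsum g y \<le> r"
    and g': "g' \<in> schreier_fns F (\<alpha>s ` {..p})"
  shows "wsum g' y \<le> r / \<Theta> p"
proof -
  have "0 \<le> r"
    using r mixed_fns_empty by fastforce
  consider "g' = (1, {})" | E n where "g' = (1, E)" "n \<le> p" "E \<in> F (\<alpha>s n)"
    using g' by (auto simp: schreier_fns_iff)
  then show ?thesis
  proof cases
    case 1
    then show ?thesis
      using \<open>0 \<le> r\<close> \<Theta>(1)[of p] by simp
  next
    case 2
    define E' where "E' = {i\<in>E. l p \<le> i}"
    have eq: "wsum g' y = wsum (1, E') y"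
      unfolding E'_def 2(1) by (rule wsum_restrict_vanishing[OF family_finite[OF 2(3)] y])
    have "E' \<in> F (\<alpha>s n)"
      unfolding E'_def by (rule family_subset_closed[OF 2(3)]) blast
    moreover have "\<forall>i\<in>E'. l n \<le> i"
      using monoD[OF l 2(2)] unfolding E'_def by auto
    ultimately have "\<Theta> n * wsum (1, E') y \<le> r"
      using r unfolding mixed_fns_def by (auto simp flip: wsum_weight)
    moreover have "\<Theta> p * wsum (1, E') y \<le> \<Theta> n * wsum (1, E') y"
      using \<Theta>(2) 2(2) by (intro mult_right_mono) (auto simp: decseq_def wsum_nonneg)
    ultimately show ?thesis
      using eq \<Theta>(1)[of p] by (simp add: pos_le_divide_eq mult.commute)
  qed
qed

text \<open>Blocks far out are small for the functionals of the early levels \<open>q \<le> N j (Mp j)\<close>, so only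
  the late levels need the bound \<open>below\<close>.\<close>
lemma c0_saturated_mixed_fns_if_threshold:
  fixes N :: "nat \<Rightarrow> nat \<Rightarrow> nat" and c :: "nat \<Rightarrow> real"
  assumes \<Theta>: "\<And>n. 0 < \<Theta> n \<and> \<Theta> n \<le> 1" "decseq \<Theta>" and l: "mono l"
    and below: "\<And>ys Mp q E j j'. normalized_blocks (mixed_fns F \<Theta> \<alpha>s l) ys Mp \<Longrightarrow> Mp 0 = M\<^sub>0 \<Longrightarrow>
       E \<in> F (\<alpha>s q) \<Longrightarrow> \<forall>i\<in>E. l q \<le> i \<Longrightarrow> j < j' \<Longrightarrow> N j' (Mp j') < q \<Longrightarrow>
       wsum (\<Theta> q, E) (ys j) \<le> c j' + (1/2)^(j+3)"
    and c: "\<And>j. 0 \<le> c j \<and> real j * c j \<le> 1"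
  shows "c0_saturated (mixed_fns F \<Theta> \<alpha>s l)"
proof (rule c0_saturated_by_dichotomy[where G' = "\<lambda>p. schreier_fns F (\<alpha>s ` {..p})"
      and P = N and M\<^sub>0 = M\<^sub>0])
  show "norming (mixed_fns F \<Theta> \<alpha>s l)"
    using norming_mixed_fns \<Theta>(1) by blast
  show "c0_saturated (schreier_fns F (\<alpha>s ` {..p}))" for p
    by (rule c0_saturated_schreier_fns) simp
  show "\<exists>M C. 0 < C \<and> (\<forall>y. vanishes_below M y \<longrightarrow> (\<forall>r. (\<forall>g\<in>mixed_fns F \<Theta> \<alpha>s l. wsum g y \<le> r)
      \<longrightarrow> (\<forall>g'\<in>schreier_fns F (\<alpha>s ` {..p}). wsum g' y \<le> C * r)))" for p
    using mixed_dominates_schreier[of \<Theta> l p] \<Theta> l by (intro exI[of _ "l p"] exI[of _ "1 / \<Theta> p"]) auto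
next
  fix ys Mp assume B: "normalized_blocks (mixed_fns F \<Theta> \<alpha>s l) ys Mp" and Mp0: "Mp 0 = M\<^sub>0"
    and small: "\<forall>k. \<forall>g\<in>schreier_fns F (\<alpha>s ` {..N k (Mp k)}). wsum g (ys k) \<le> (1/2)^k"
  show "\<exists>C. \<forall>g\<in>mixed_fns F \<Theta> \<alpha>s l. \<forall>n. (\<Sum>j<n. wsum g (ys j)) \<le> C"
  proof (intro exI[of _ 8] ballI allI)
    fix g n assume g: "g \<in> mixed_fns F \<Theta> \<alpha>s l"
    then obtain q E where g_eq: "g = (\<Theta> q, E)" and E: "E \<in> F (\<alpha>s q)" "\<forall>i\<in>E. l q \<le> i"
      unfolding mixed_fns_def by blast
    show "(\<Sum>j<n. wsum g (ys j)) \<le> 8"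
    proof (rule sum_le_8_threshold[where P = "\<lambda>j. N j (Mp j) < q" and c = c])
      show "wsum g (ys j) \<le> (1/2)^j" if "\<not> N j (Mp j) < q" for j
      proof -
        have "(1, E) \<in> schreier_fns F (\<alpha>s ` {..N j (Mp j)})"
          using that by (intro schreier_fnsI[where F = F, OF _ E(1)]) auto
        then show ?thesis
          using small wsum_le_unit_weight[of "\<Theta> q" E "ys j"] \<Theta>(1)[of q] g_eq by fastforce
      qed
      show "wsum g (ys j) \<le> 1" for j
        using normalized_blocksD(3)[OF B g] .
      show "wsum g (ys j) \<le> c j' + (1/2)^(j+3)" if "j < j'" "N j' (Mp j') < q" for j j'
        using below[OF B Mp0 E that] g_eq by simp
    qed (rule c)
  qed
qed (rule schreier_fns_empty)

lemma c0_saturated_mixed_fns_ell: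
  assumes \<Theta>: "\<And>n. 0 < \<Theta> n \<and> \<Theta> n \<le> 1" "decseq \<Theta>"
    and l: "mono l" "filterlim l at_top sequentially"
  shows "c0_saturated (mixed_fns F \<Theta> \<alpha>s l)"
proof -
  have "\<exists>N. \<forall>q>N. M \<le> l q" for M
    using l(2) unfolding filterlim_at_top eventually_sequentially by (meson less_imp_le)
  then obtain N where N: "\<And>M q. N M < q \<Longrightarrow> M \<le> l q"
    by metis
  show ?thesis
  proof (rule c0_saturated_mixed_fns_if_threshold[OF \<Theta> l(1), where N = "\<lambda>_ M. N M" and c = "\<lambda>_. 0"])
    fix ys Mp q E j j'
    assume B: "normalized_blocks (mixed_fns F \<Theta> \<alpha>s l) ys Mp" and E: "E \<in> F (\<alpha>s q)" "\<forall>i\<in>E. l q \<le> i"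
      and jj: "j < j'" and q: "N (Mp j') < q"
    have "Mp (Suc j) \<le> l q"
      using N[OF q] strict_mono_less_eq[OF normalized_blocksD(1)[OF B], of "Suc j" j'] jj by simp
    then have "\<forall>i\<in>snd (\<Theta> q, E). Mp (Suc j) \<le> i"
      using E(2) by auto
    moreover have "(\<Theta> q, E) \<in> mixed_fns F \<Theta> \<alpha>s l"
      using E unfolding mixed_fns_def by blast
    ultimately show "wsum (\<Theta> q, E) (ys j) \<le> 0 + (1/2)^(j+3)"
      using normalized_blocks_beyond[OF B] by simp
  qed simp
qed

lemma c0_saturated_mixed_fns_theta:
  assumes \<Theta>: "\<And>n. 0 < \<Theta> n \<and> \<Theta> n \<le> 1" "decseq \<Theta>" "\<Theta> \<longlonglongrightarrow> 0"
    and \<alpha>s: "\<not> ord_least (\<alpha>s 0)"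
  shows "c0_saturated (mixed_fns F \<Theta> \<alpha>s (\<lambda>_. 0))"
proof -
  obtain K where K: "\<And>t. K \<le> t \<Longrightarrow> {t} \<in> F (\<alpha>s 0)"
    using singletons_eventually_in_family[OF \<alpha>s] by blast
  define t0 where "t0 = \<Theta> 0"
  have t0: "0 < t0"
    using \<Theta>(1) by (simp add: t0_def)
  \<comment> \<open>Late levels weigh so little that the first \<open>M\<close> coordinates of a block, each at most
    \<open>1 / t0\<close>, contribute at most \<open>1 / (k + 1)\<close>.\<close>
  have "\<exists>N. \<forall>q>N. \<Theta> q \<le> t0 / ((real k + 1) * (real M + 1))" for k M
    using tendsto_zero_eventually_le[OF \<Theta>(3)] t0 by simp
  then obtain N where N: "\<And>k M q. N k M < q \<Longrightarrow> \<Theta> q \<le> t0 / ((real k + 1) * (real M + 1))"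
    by metis
  show ?thesis
  proof (rule c0_saturated_mixed_fns_if_threshold[OF \<Theta>(1,2), where N = N and c = "\<lambda>j. 1 / (real j + 1)"
        and M\<^sub>0 = K])
    fix ys Mp q E j j'
    assume B: "normalized_blocks (mixed_fns F \<Theta> \<alpha>s (\<lambda>_. 0)) ys Mp" and Mp0: "Mp 0 = K"
      and E: "E \<in> F (\<alpha>s q)" and jj: "j < j'" and q: "N j' (Mp j') < q"
    have g: "(\<Theta> q, E) \<in> mixed_fns F \<Theta> \<alpha>s (\<lambda>_. 0)"
      using E unfolding mixed_fns_def by blast
    have "\<bar>ys j t\<bar> \<le> 1 / t0" for t
      by (rule normalized_blocks_bounded_coordinates[OF B t0])
        (use K Mp0 in \<open>force simp: mixed_fns_def t0_def\<close>)
    then have "(\<Sum>t<Mp (Suc j). \<bar>ys j t\<bar>) \<le> real (Mp (Suc j)) * (1 / t0)"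
      using sum_bounded_above[of "{..<Mp (Suc j)}" "\<lambda>t. \<bar>ys j t\<bar>" "1 / t0"] by simp
    also have "\<dots> \<le> real (Mp j') / t0"
      using strict_mono_less_eq[OF normalized_blocksD(1)[OF B], of "Suc j" j'] jj t0
      by (simp add: divide_right_mono)
    finally have head: "\<Theta> q * (\<Sum>t<Mp (Suc j). \<bar>ys j t\<bar>) \<le> 1 / (real j' + 1)"
      using mult_le_inverse_Suc[OF t0 _ N[OF q]] \<Theta>(1)[of q] by (simp add: sum_nonneg)
    have "wsum (\<Theta> q, E) (ys j) \<le>
        \<Theta> q * (\<Sum>t<Mp (Suc j). \<bar>ys j t\<bar>) + wsum (\<Theta> q, E) (tail_from (Mp (Suc j)) (ys j))"
      using wsum_split_at \<Theta>(1)[of q] family_finite[OF E] by (simp add: less_imp_le)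
    also have "\<dots> \<le> 1 / (real j' + 1) + (1/2)^(j+3)"
      using head normalized_blocksD(5)[OF B g, of j] by linarith
    finally show "wsum (\<Theta> q, E) (ys j) \<le> 1 / (real j' + 1) + (1/2)^(j+3)" .
  qed (auto simp: mono_def field_simps)
qed

lemma schreier_norm_eq_fnorm: "schreier_norm F \<alpha> = fnorm (schreier_fns F {\<alpha>})"
proof -
  have "schreier_fns F {\<alpha>} = (\<lambda>E. (1, E)) ` F \<alpha>"
    unfolding schreier_fns_def using empty_in_family by auto
  then show ?thesis
    unfolding schreier_norm_def fnorm_def by (simp add: image_image wsum_def fun_eq_iff)
qed

lemma singletons_in_schreier_fns:
  assumes "\<not> ord_least \<alpha>"
  shows "\<exists>K. \<forall>t\<ge>K. \<exists>\<theta>>0. (\<theta>, {t}) \<in> schreier_fns F {\<alpha>}"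
  using singletons_eventually_in_family[OF assms] schreier_fnsI[where F = F, OF singletonI]
  by (meson zero_less_one)

lemma singletons_in_mixed_fns:
  assumes "\<And>n. 0 < \<Theta> n" "l 0 = 0" "\<not> ord_least (\<alpha>s 0)"
  shows "\<exists>K. \<forall>t\<ge>K. \<exists>\<theta>>0. (\<theta>, {t}) \<in> mixed_fns F \<Theta> \<alpha>s l"
proof -
  obtain K where "\<forall>t\<ge>K. {t} \<in> F (\<alpha>s 0)"
    using singletons_eventually_in_family[OF assms(3)] by blast
  then have "\<forall>t\<ge>K. (\<Theta> 0, {t}) \<in> mixed_fns F \<Theta> \<alpha>s l"
    using assms(2) unfolding mixed_fns_def by force
  then show ?thesis
    using assms(1) by blast
qed

lemma mixed_norm_l_eq_fnorm:
  assumes "\<And>n. 0 < \<Theta> n"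
  shows "mixed_norm_l F \<Theta> \<alpha>s l = fnorm (mixed_fns F \<Theta> \<alpha>s l)"
proof
  fix x
  show "mixed_norm_l F \<Theta> \<alpha>s l x = fnorm (mixed_fns F \<Theta> \<alpha>s l) x"
    unfolding mixed_norm_l_def mixed_fns_eq_Union
    by (rule SUP_weighted_eq_fnorm[OF assms]) (use empty_in_family in blast)
qed

lemma mixed_norm_eq_fnorm:
  assumes "\<And>n. 0 < \<Theta> n"
  shows "mixed_norm F \<Theta> \<alpha>s = fnorm (mixed_fns F \<Theta> \<alpha>s (\<lambda>_. 0))"
proof
  fix x
  show "mixed_norm F \<Theta> \<alpha>s x = fnorm (mixed_fns F \<Theta> \<alpha>s (\<lambda>_. 0)) x"
    unfolding mixed_norm_def mixed_fns_eq_Union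
    using SUP_weighted_eq_fnorm[where \<Theta> = \<Theta> and S = "\<lambda>n. F (\<alpha>s n)" and x = x] assms empty_in_family
    by auto
qed

end

theorem lemma6p9:
  fixes A :: "nat \<Rightarrow> 'o::wellorder \<Rightarrow> 'o set" and F :: "'o \<Rightarrow> nat set set"
    and \<alpha> :: 'o and \<alpha>s :: "nat \<Rightarrow> 'o" and \<Theta> :: "nat \<Rightarrow> real" and l :: "nat \<Rightarrow> nat"
  assumes countable_ords: "\<forall>\<gamma>::'o. countable {..<\<gamma>}"
    and fam: "transfinite_family A F"
    and alpha: "\<not> ord_least \<alpha>"
    and alphas: "strict_mono \<alpha>s" "\<not> ord_least (\<alpha>s 0)"
    and theta: "\<forall>n. 0 < \<Theta> n \<and> \<Theta> n \<le> 1" "decseq \<Theta>"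
    and ell: "mono l" "l 0 = 0" "filterlim l at_top sequentially"
  shows "hereditarily_c0 (schreier_norm F \<alpha>)
       \<and> hereditarily_c0 (mixed_norm_l F \<Theta> \<alpha>s l)
       \<and> (\<Theta> \<longlonglongrightarrow> 0 \<longrightarrow> hereditarily_c0 (mixed_norm F \<Theta> \<alpha>s))"
proof (intro conjI impI)
  have \<Theta>: "\<And>n. 0 < \<Theta> n \<and> \<Theta> n \<le> 1"
    using theta(1) by blast
  then have \<Theta>_pos: "\<And>n. 0 < \<Theta> n"
    by blast
  have "c0_saturated (schreier_fns F {\<alpha>})"
    by (rule c0_saturated_schreier_fns[OF fam]) simp
  then show "hereditarily_c0 (schreier_norm F \<alpha>)"
    unfolding schreier_norm_eq_fnorm[OF fam]
    using norming_schreier_fns[OF fam] singletons_in_schreier_fns[OF fam alpha]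
    by (rule hereditarily_c0_if_c0_saturated)
  have sing: "\<exists>K. \<forall>t\<ge>K. \<exists>\<theta>>0. (\<theta>, {t}) \<in> mixed_fns F \<Theta> \<alpha>s l'" if "l' 0 = 0" for l'
    using singletons_in_mixed_fns[OF fam, of \<Theta> l' \<alpha>s] \<Theta>_pos that alphas(2) by blast
  show "hereditarily_c0 (mixed_norm_l F \<Theta> \<alpha>s l)"
    unfolding mixed_norm_l_eq_fnorm[OF fam \<Theta>_pos]
    using c0_saturated_mixed_fns_ell[OF fam \<Theta> theta(2) ell(1,3)] norming_mixed_fns[OF fam \<Theta>_pos]
      sing[of l, OF ell(2)]
    by (rule hereditarily_c0_if_c0_saturated)
  assume "\<Theta> \<longlonglongrightarrow> 0"
  then have "c0_saturated (mixed_fns F \<Theta> \<alpha>s (\<lambda>_. 0))"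
    using c0_saturated_mixed_fns_theta[OF fam, of \<Theta> \<alpha>s] \<Theta> theta(2) alphas(2) by blast
  then show "hereditarily_c0 (mixed_norm F \<Theta> \<alpha>s)"
    unfolding mixed_norm_eq_fnorm[OF fam \<Theta>_pos]
    using norming_mixed_fns[OF fam \<Theta>_pos] sing[of "\<lambda>_. 0", simplified]
    by (rule hereditarily_c0_if_c0_saturated)
qed

end
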